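(* Let $n\ge2$ and $m\ge2$. There is a constant $C=C(m,n)$ such that for all Schwartz functions $f_1,\dots,f_m$ on $\mathbb R^n$, every $k\in\{1,\dots,m\}$ and every $x\in\mathbb R^n$, $$\mathcal M(f_1,\dots,f_m)(x)\le C\Big(\prod_{j\ne k}Mf_j(x)\Big)\,Sf_k(x).$$
   Context: For functions $f_1,\dots,f_m$ on $\mathbb R^n$ the $m$-linear spherical maximal function is $$\mathcal M(f_1,\dots,f_m)(x)=\sup_{t>0}\Big|\int_{\mathbb S^{mn-1}}\prod_{j=1}^m f_j(x-ty^j)\,d\sigma_{mn-1}(y^1,\dots,y^m)\Big|,$$ where $(y^1,\dots,y^m)\in\mathbb R^{mn}$ with $y^j\in\mathbb R^n$, and $d\sigma_{mn-1}$ is the surface measure on the unit sphere $\mathbb S^{mn-1}\subset\mathbb R^{mn}$. $Mf$ is the (centered) Hardy–Littlewood maximal function of $f$ on $\mathbb R^n$, and $Sf(x)=\sup_{t>0}\big|\int_{\mathbb S^{n-1}}f(x-ty)\,d\sigma_{n-1}(y)\big|$ is the linear spherical maximal function on $\mathbb R^n$. *)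

theory Defs
  imports "HOL-Analysis.Analysis"
begin

definition partial_dir :: "'a::euclidean_space \<Rightarrow> ('a \<Rightarrow> complex) \<Rightarrow> ('a \<Rightarrow> complex)" where
  "partial_dir v f = (\<lambda>x. frechet_derivative f (at x) v)"

fun iter_partial :: "'a::euclidean_space list \<Rightarrow> ('a \<Rightarrow> complex) \<Rightarrow> ('a \<Rightarrow> complex)" where
  "iter_partial [] f = f"
| "iter_partial (v # vs) f = partial_dir v (iter_partial vs f)"

definition schwartz :: "('a::euclidean_space \<Rightarrow> complex) \<Rightarrow> bool" where
  "schwartz f \<longleftrightarrow>
     (\<forall>vs. set vs \<subseteq> Basis \<longrightarrow> (\<forall>x. iter_partial vs f differentiable (at x))) \<and>
     (\<forall>vs (N::nat). set vs \<subseteq> Basis \<longrightarrow>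
        bounded (range (\<lambda>x. ((1 + norm x) ^ N) *\<^sub>R iter_partial vs f x)))"

text \<open>Surface measure on the unit sphere of a d-dimensional Euclidean space, defined via the
  cone construction: sigma(A) = d * Lebesgue measure of {r y : 0 < r <= 1, y in A}.  It is concentrated on sphere 0 1.\<close>
definition sphere_measure :: "'a::euclidean_space measure" where
  "sphere_measure =
     distr (density lborel (\<lambda>x. indicator (ball 0 1 - {0}) x * of_nat DIM('a))) borel
           (\<lambda>x. x /\<^sub>R norm x)"

definition HL_max :: "('a::euclidean_space \<Rightarrow> complex) \<Rightarrow> 'a \<Rightarrow> ennreal" where
  "HL_max f x = (SUP r\<in>{0<..}. (\<integral>\<^sup>+ y\<in>ball x r. ennreal (norm (f y)) \<partial>lborel) / emeasure lborel (ball x r))"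

definition sph_max :: "('a::euclidean_space \<Rightarrow> complex) \<Rightarrow> 'a \<Rightarrow> ennreal" where
  "sph_max f x = (SUP t\<in>{0<..}. ennreal (norm (LINT y|sphere_measure. f (x - t *\<^sub>R y))))"

text \<open>m-linear spherical maximal function; the index type 'm has m elements and
  real^'n^'m is R^{mn} with the Euclidean norm, y $ j being the block y^j.\<close>
definition multi_sph_max ::
    "('m::finite \<Rightarrow> real^'n \<Rightarrow> complex) \<Rightarrow> real^'n \<Rightarrow> ennreal" where
  "multi_sph_max f x = (SUP t\<in>{0<..}. ennreal (norm
      (LINT y|(sphere_measure :: (real^'n^'m) measure). (\<Prod>j\<in>UNIV. f j (x - t *\<^sub>R (y $ j))))))"

end

theory Submission
  imports Defs
begin

text \<open>
  Write a point of the unit sphere of R^{mn} as y = (w + e_k \<theta>) / \<rho>(w), \<rho>(w) = sqrt (1 + |w|^2),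
  where \<theta> ranges over the unit sphere of the k-th block R^n and w over the other blocks
  R^{(m-1)n}; in these coordinates d\<sigma>(y) = \<rho>(w)^{-mn} dw d\<sigma>(\<theta>). For fixed w the \<theta>-integral of
  \<Prod>_j f_j (x - t y^j) is the product of the factors j \<noteq> k, evaluated at u = w / \<rho>(w), times a
  spherical average of f_k of radius t / \<rho>(w), hence at most Sf_k(x) times that product.
  The substitution u = w / \<rho>(w) maps R^{(m-1)n} onto the unit ball with Jacobian
  \<rho>(w)^{-(m-1)n-2}, which dominates \<rho>(w)^{-mn} because n \<ge> 2. Finally the integral over the
  unit ball of \<Prod>_{j\<noteq>k} |f_j (x - t u^j)| is at most the product of the integrals over the unit
  ball of R^n, each of which is |B| Mf_j(x) at most.
\<close>

section \<open>Polar coordinates for homogeneous measures\<close>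

lemma measure_eqI_Iio:
  fixes M N :: "real measure"
  assumes sets: "sets M = sets borel" "sets N = sets borel"
  assumes fin: "\<And>x. emeasure M {..< x} < \<infinity>"
  assumes "\<And>x. emeasure M {..< x} = emeasure N {..< x}"
  shows "M = N"
proof (rule measure_eqI_generator_eq_countable)
  let ?LT = "\<lambda>a::real. {..< a}" let ?E = "range ?LT"
  show "Int_stable ?E"
    unfolding Int_stable_def
  proof safe
    fix a b :: real show "{..<a} \<inter> {..<b} \<in> ?E" by (rule image_eqI[where x="min a b"]) auto
  qed
  show "?E \<subseteq> Pow UNIV" "sets M = sigma_sets UNIV ?E" "sets N = sigma_sets UNIV ?E"
    unfolding sets borel_Iio by auto
  show "?LT`Rats \<subseteq> ?E" "(\<Union>i\<in>Rats. ?LT i) = UNIV" "\<And>a. a \<in> ?LT`Rats \<Longrightarrow> emeasure M a \<noteq> \<infinity>"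
    using fin by (auto simp: less_top) (metis Rats_no_top_le less_add_one order_less_le_trans)
qed (auto intro: assms countable_rat)

definition radial_measure :: "nat \<Rightarrow> real measure" where
  "radial_measure d = density lborel (\<lambda>s. ennreal (indicator {0<..} s * s^(d-1)))"

lemma sets_radial_measure[simp, measurable_cong]: "sets (radial_measure d) = sets borel"
  by (simp add: radial_measure_def)

lemma emeasure_radial_measure_lessThan:
  assumes "0 < d"
  shows "emeasure (radial_measure d) {..<b} = ennreal (max 0 b ^ d / d)"
proof -
  have "emeasure (radial_measure d) {..<b} =
      (\<integral>\<^sup>+s. ennreal (indicator {0<..} s * s^(d-1)) * indicator {..<b} s \<partial>lborel)"
    unfolding radial_measure_def by (rule emeasure_density) auto
  also have "\<dots> = (\<integral>\<^sup>+s. ennreal (s^(d-1)) * indicator {0..max 0 b} s \<partial>lborel)"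
    by (rule nn_integral_cong_AE) (use AE_lborel_singleton[of 0] AE_lborel_singleton[of b] in
        eventually_elim, auto split: split_indicator)
  also have "\<dots> = ennreal (max 0 b ^ d / d - 0 ^ d / d)"
  proof (rule nn_integral_FTC_Icc[where F="\<lambda>s. s^d/ real d"])
    fix x :: real
    show "((\<lambda>s. s^d/ real d) has_real_derivative x^(d-1)) (at x)"
      using assms by (auto intro!: derivative_eq_intros simp: field_simps)
  qed auto
  finally show ?thesis using assms by (simp add: power_0_left)
qed

lemma sigma_finite_radial_measure:
  assumes "0 < d" shows "sigma_finite_measure (radial_measure d)"
proof
  show "\<exists>A. countable A \<and> A \<subseteq> sets (radial_measure d) \<and> \<Union> A = space (radial_measure d) \<and>
      (\<forall>a\<in>A. emeasure (radial_measure d) a \<noteq> \<infinity>)"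
  proof (intro exI[of _ "range (\<lambda>n::nat. {..<real n})"] conjI)
    show "\<Union> (range (\<lambda>n::nat. {..<real n})) = space (radial_measure d)"
      by (auto simp: radial_measure_def) (meson reals_Archimedean2)
    show "\<forall>a\<in>range (\<lambda>n::nat. {..<real n}). emeasure (radial_measure d) a \<noteq> \<infinity>"
      using emeasure_radial_measure_lessThan[OF assms] by auto
  qed auto
qed

lemma borel_punctured_ball[measurable]: "ball 0 r - {0::'a::euclidean_space} \<in> sets borel"
  by (intro sets.Diff borel_open borel_closed) auto

lemma borel_Compl_zero[measurable]: "- {0::'a::euclidean_space} \<in> sets borel"
  by (rule borel_open) (simp add: closed_singleton open_Compl)

lemma borel_measurable_normalize[measurable]:
  "(\<lambda>x::'a::euclidean_space. x /\<^sub>R norm x) \<in> borel_measurable borel"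
  by (intro borel_measurable_scaleR borel_measurable_inverse borel_measurable_norm) auto

definition polar_set :: "real set \<Rightarrow> 'a::euclidean_space set \<Rightarrow> 'a set" where
  "polar_set A B = {x. x \<noteq> 0 \<and> norm x \<in> A \<and> x /\<^sub>R norm x \<in> B}"

lemma sets_polar_set[measurable]:
  assumes "A \<in> sets borel" "B \<in> sets borel"
  shows "polar_set A B \<in> sets borel"
proof -
  have "polar_set A B = - {0} \<inter> norm -` A \<inter> (\<lambda>x. x /\<^sub>R norm x) -` B"
    by (auto simp: polar_set_def)
  also have "\<dots> \<in> sets borel"
    using assms by (intro sets.Int borel_Compl_zero measurable_sets_borel[OF borel_measurable_norm]
        measurable_sets_borel[OF borel_measurable_normalize])
  finally show ?thesis .
qed

text \<open>
  The cone construction of sphere_measure, for any measure \<mu> homogeneous of degree d: besides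
  Lebesgue measure it is needed for Lebesgue measure on the blocks of R^{mn} other than the k-th
  one, where it yields polar coordinates in the variable w.
\<close>
locale homogeneous_measure =
  fixes \<mu> :: "'a::euclidean_space measure" and d :: nat
  assumes sets_eq[measurable_cong]: "sets \<mu> = sets borel"
  and d_pos: "0 < d"
  and scale: "\<And>c A. 0 < c \<Longrightarrow> A \<in> sets borel \<Longrightarrow>
      emeasure \<mu> ((\<lambda>x. c *\<^sub>R x) -` A) = ennreal ((1/c)^d) * emeasure \<mu> A"
  and ball_finite: "emeasure \<mu> (ball 0 1) < \<infinity>"
begin

definition sph :: "'a measure" where
  "sph = distr (density \<mu> (\<lambda>x. indicator (ball 0 1 - {0}) x * of_nat d)) borel (\<lambda>x. x /\<^sub>R norm x)"

lemma measurable_mu_eq: "measurable \<mu> N = measurable borel N"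
  by (rule measurable_cong_sets[OF sets_eq refl])

lemma space_mu[simp]: "space \<mu> = UNIV"
  using sets_eq_imp_space_eq[OF sets_eq] by simp

lemma sets_sph[simp, measurable_cong]: "sets sph = sets borel"
  by (simp add: sph_def)

lemma space_sph[simp]: "space sph = UNIV"
  by (simp add: sph_def)

lemma emeasure_ball_finite:
  assumes "0 < r" shows "emeasure \<mu> (ball 0 r) < \<infinity>"
proof -
  have "(\<lambda>x. (1/r) *\<^sub>R x) -` ball 0 1 = ball (0::'a) r"
    using assms by (auto simp: mem_ball_0 field_simps)
  then show ?thesis
    using scale[of "1/r" "ball 0 1"] ball_finite assms by (simp add: ennreal_mult_less_top)
qed

lemma emeasure_singleton_zero: "emeasure \<mu> {0} = 0"
proof -
  have "(\<lambda>x. 2 *\<^sub>R x) -` {0::'a} = {0}" by auto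
  then have eq: "emeasure \<mu> {0} = ennreal ((1/2)^d) * emeasure \<mu> {0}"
    using scale[of 2 "{0}"] by simp
  have "emeasure \<mu> {0} \<le> emeasure \<mu> (ball 0 1)"
    by (rule emeasure_mono) (auto simp: sets_eq)
  with ball_finite obtain r where r: "emeasure \<mu> {0} = ennreal r" "0 \<le> r"
    by (cases "emeasure \<mu> {0}") auto
  with eq have "r = (1/2)^d * r"
    by (simp add: ennreal_mult[symmetric])
  then have "(1 - (1/2::real)^d) * r = 0" by (simp add: algebra_simps)
  moreover have "(1/2::real)^d < 1" using d_pos by (simp add: power_less_one_iff)
  ultimately show ?thesis using r by simp
qed

lemma AE_mu_nonzero: "AE x in \<mu>. x \<noteq> 0"
  by (rule AE_I[where N="{0}"]) (auto simp: emeasure_singleton_zero sets_eq)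

lemma emeasure_polar_set_lessThan:
  assumes "B \<in> sets borel" "0 < r"
  shows "emeasure \<mu> (polar_set {..<r} B) = ennreal (r^d) * emeasure \<mu> (polar_set {..<1} B)"
proof -
  have "(\<lambda>x. (1/r) *\<^sub>R x) -` polar_set {..<1} B = polar_set {..<r} B"
    using assms by (auto simp: polar_set_def divide_simps)
  then show ?thesis
    using scale[of "1/r" "polar_set {..<1} B"] assms by simp
qed

lemma emeasure_polar_set_finite:
  assumes "B \<in> sets borel" "0 < r"
  shows "emeasure \<mu> (polar_set {..<r} B) < \<infinity>"
proof -
  have "emeasure \<mu> (polar_set {..<r} B) \<le> emeasure \<mu> (ball 0 r)"
    by (rule emeasure_mono) (auto simp: sets_eq polar_set_def)
  then show ?thesis using emeasure_ball_finite[OF assms(2)] by (rule le_less_trans)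
qed

lemma emeasure_sph:
  assumes "B \<in> sets borel"
  shows "emeasure sph B = of_nat d * emeasure \<mu> (polar_set {..<1} B)"
proof -
  have "emeasure sph B = (\<integral>\<^sup>+x. indicator (ball 0 1 - {0}) x * of_nat d *
      indicator ((\<lambda>x. x /\<^sub>R norm x) -` B) x \<partial>\<mu>)"
    unfolding sph_def using assms
    by (subst emeasure_distr) (auto intro!: emeasure_density simp: sets_eq measurable_mu_eq
       intro: measurable_sets_borel[OF borel_measurable_normalize])
  also have "\<dots> = (\<integral>\<^sup>+x. of_nat d * indicator (polar_set {..<1} B) x \<partial>\<mu>)"
    by (intro nn_integral_cong) (auto simp: polar_set_def split: split_indicator)
  also have "\<dots> = of_nat d * emeasure \<mu> (polar_set {..<1} B)"
    using assms by (subst nn_integral_cmult_indicator) (auto simp: sets_eq)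
  finally show ?thesis .
qed

sublocale sph: finite_measure sph
proof
  show "emeasure sph (space sph) \<noteq> \<infinity>"
    using emeasure_polar_set_finite[of UNIV 1] by (auto simp: emeasure_sph ennreal_mult_eq_top_iff)
qed

lemma AE_sph_norm_eq_1: "AE y in sph. norm y = 1"
proof -
  have "AE x in density \<mu> (\<lambda>x. indicator (ball 0 1 - {0}) x * of_nat d). norm (x /\<^sub>R norm x) = 1"
    by (subst AE_density) (auto simp: measurable_mu_eq split: split_indicator)
  then show ?thesis unfolding sph_def
    by (subst AE_distr_iff) auto
qed

lemma emeasure_polar_set:
  assumes A: "A \<in> sets borel" and B[measurable]: "B \<in> sets borel"
  shows "emeasure \<mu> (polar_set A B) = emeasure (radial_measure d) A * emeasure sph B"
proof -
  define N where "N = distr (density \<mu> (indicator (polar_set UNIV B))) borel norm"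
  have emeasure_N: "emeasure N X = emeasure \<mu> (polar_set X B)" if [measurable]: "X \<in> sets borel" for X
  proof -
    have "emeasure N X = (\<integral>\<^sup>+x. indicator (polar_set UNIV B) x * indicator (norm -` X) x \<partial>\<mu>)"
      unfolding N_def
      by (subst emeasure_distr) (auto intro!: emeasure_density measurable_sets_borel[OF borel_measurable_norm]
          simp: measurable_mu_eq sets_eq)
    also have "\<dots> = (\<integral>\<^sup>+x. indicator (polar_set X B) x \<partial>\<mu>)"
      by (intro nn_integral_cong) (auto simp: polar_set_def split: split_indicator)
    finally show ?thesis by (simp add: sets_eq)
  qed
  have empty: "polar_set {..<b} B = {}" if "b \<le> 0" for b
  proof -
    have "\<not> norm x < b" for x :: 'a using that norm_ge_zero[of x] by linarith
    then show ?thesis by (auto simp: polar_set_def)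
  qed
  have "N = density (radial_measure d) (\<lambda>_. emeasure sph B)"
  proof (rule measure_eqI_Iio)
    fix b :: real
    show "emeasure N {..<b} < \<infinity>"
      using emeasure_polar_set_finite[OF B] empty by (cases "0 < b") (auto simp: emeasure_N)
    show "emeasure N {..<b} = emeasure (density (radial_measure d) (\<lambda>_. emeasure sph B)) {..<b}"
    proof (cases "0 < b")
      case True
      have "emeasure sph B * emeasure (radial_measure d) {..<b} =
          (of_nat d * ennreal (b ^ d / d)) * emeasure \<mu> (polar_set {..<1} B)"
        using True by (simp add: emeasure_sph emeasure_radial_measure_lessThan[OF d_pos] max_def mult_ac)
      also have "of_nat d * ennreal (b ^ d / d) = ennreal (b^d)"
        using True d_pos by (simp add: ennreal_of_nat_eq_real_of_nat flip: ennreal_mult)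
      finally show ?thesis using True
        by (simp add: emeasure_N emeasure_polar_set_lessThan[OF B True] emeasure_density_const)
    next
      case False
      then show ?thesis using empty d_pos
        by (simp add: emeasure_N emeasure_density_const emeasure_radial_measure_lessThan max_def)
    qed
  qed (auto simp: N_def)
  then show ?thesis
    using A by (simp add: emeasure_N[symmetric] emeasure_density_const mult.commute)
qed

definition polar :: "'a \<Rightarrow> real \<times> 'a" where
  "polar x = (norm x, x /\<^sub>R norm x)"

lemma measurable_polar[measurable]: "polar \<in> borel \<rightarrow>\<^sub>M borel \<Otimes>\<^sub>M borel"
  unfolding polar_def by measurable

lemma radial_sph_eq_distr_polar:
  "radial_measure d \<Otimes>\<^sub>M sph = distr (density \<mu> (indicator (-{0}))) (borel \<Otimes>\<^sub>M borel) polar"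
proof (rule pair_measure_eqI)
  show "sigma_finite_measure (radial_measure d)" by (rule sigma_finite_radial_measure[OF d_pos])
  show "sigma_finite_measure sph" ..
  fix A B assume "A \<in> sets (radial_measure d)" "B \<in> sets sph"
  then have [measurable]: "A \<in> sets borel" "B \<in> sets borel" by auto
  have [measurable]: "polar -` (A \<times> B) \<in> sets borel"
    using measurable_sets[OF measurable_polar, of "A \<times> B"] by auto
  have "emeasure (distr (density \<mu> (indicator (-{0}))) (borel \<Otimes>\<^sub>M borel) polar) (A \<times> B) =
      (\<integral>\<^sup>+x. indicator (-{0}) x * indicator (polar -` (A \<times> B)) x \<partial>\<mu>)"
    by (subst emeasure_distr) (auto intro!: emeasure_density simp: measurable_mu_eq sets_eq)
  also have "\<dots> = (\<integral>\<^sup>+x. indicator (polar_set A B) x \<partial>\<mu>)"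
    by (intro nn_integral_cong) (auto simp: polar_def polar_set_def split: split_indicator)
  also have "\<dots> = emeasure \<mu> (polar_set A B)"
    by (simp add: sets_eq)
  finally show "emeasure (radial_measure d) A * emeasure sph B =
      emeasure (distr (density \<mu> (indicator (-{0}))) (borel \<Otimes>\<^sub>M borel) polar) (A \<times> B)"
    by (simp add: emeasure_polar_set)
qed (simp cong: sets_pair_measure_cong)

lemma nn_integral_polar:
  assumes f[measurable]: "f \<in> borel_measurable borel"
  shows "(\<integral>\<^sup>+x. f x \<partial>\<mu>) =
    (\<integral>\<^sup>+s. ennreal (indicator {0<..} s * s^(d-1)) * (\<integral>\<^sup>+y. f (s *\<^sub>R y) \<partial>sph) \<partial>lborel)"
proof -
  interpret pair_sigma_finite "radial_measure d" sph
    by (intro pair_sigma_finite.intro sigma_finite_radial_measure d_pos sph.sigma_finite_measure_axioms)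
  have [measurable]: "(\<lambda>p. f (fst p *\<^sub>R snd p)) \<in> borel_measurable (radial_measure d \<Otimes>\<^sub>M sph)"
    by (simp add: measurable_cong_sets[OF sets_pair_measure_cong[OF sets_radial_measure sets_sph] refl])
  have "(\<integral>\<^sup>+x. f x \<partial>\<mu>) = (\<integral>\<^sup>+x. indicator (-{0}) x * f (fst (polar x) *\<^sub>R snd (polar x)) \<partial>\<mu>)"
    by (rule nn_integral_cong_AE) (use AE_mu_nonzero in eventually_elim, auto simp: polar_def)
  also have "\<dots> = (\<integral>\<^sup>+p. f (fst p *\<^sub>R snd p) \<partial>(radial_measure d \<Otimes>\<^sub>M sph))"
    by (simp add: radial_sph_eq_distr_polar nn_integral_distr nn_integral_density measurable_mu_eq)
  also have "\<dots> = (\<integral>\<^sup>+s. (\<integral>\<^sup>+y. f (s *\<^sub>R y) \<partial>sph) \<partial>radial_measure d)"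
    by (simp add: sph.nn_integral_fst[symmetric])
  also have "\<dots> = (\<integral>\<^sup>+s. ennreal (indicator {0<..} s * s^(d-1)) * (\<integral>\<^sup>+y. f (s *\<^sub>R y) \<partial>sph) \<partial>lborel)"
    unfolding radial_measure_def
    by (subst nn_integral_density) (auto intro!: borel_measurable_nn_integral
        simp: measurable_cong_sets[OF sets_pair_measure_cong[OF refl sets_sph] refl])
  finally show ?thesis .
qed

lemma nn_integral_scaleR:
  assumes c: "0 < c" and h[measurable]: "h \<in> borel_measurable borel"
  shows "(\<integral>\<^sup>+x. h (c *\<^sub>R x) \<partial>\<mu>) = ennreal ((1/c)^d) * (\<integral>\<^sup>+x. h x \<partial>\<mu>)"
proof -
  have distr_eq: "distr \<mu> borel (\<lambda>x. c *\<^sub>R x) = density \<mu> (\<lambda>_. ennreal ((1/c)^d))"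
  proof (rule measure_eqI)
    fix A assume "A \<in> sets (distr \<mu> borel (\<lambda>x. c *\<^sub>R x))"
    then have A: "A \<in> sets borel" by simp
    then show "emeasure (distr \<mu> borel (\<lambda>x. c *\<^sub>R x)) A = emeasure (density \<mu> (\<lambda>_. ennreal ((1/c)^d))) A"
      by (simp add: emeasure_distr emeasure_density measurable_mu_eq sets_eq scale[OF c A]
          nn_integral_cmult_indicator)
  qed (simp add: sets_eq)
  have "(\<integral>\<^sup>+x. h x \<partial>distr \<mu> borel (\<lambda>x. c *\<^sub>R x)) = ennreal ((1/c)^d) * (\<integral>\<^sup>+x. h x \<partial>\<mu>)"
    unfolding distr_eq by (subst nn_integral_density) (auto simp: measurable_mu_eq nn_integral_cmult)
  moreover have "(\<integral>\<^sup>+x. h (c *\<^sub>R x) \<partial>\<mu>) = (\<integral>\<^sup>+x. h x \<partial>distr \<mu> borel (\<lambda>x. c *\<^sub>R x))"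
    by (subst nn_integral_distr) (auto simp: measurable_mu_eq)
  ultimately show ?thesis by simp
qed

lemma nn_integral_scaleR_eq:
  assumes c: "0 < c" and h[measurable]: "h \<in> borel_measurable borel"
  shows "(\<integral>\<^sup>+x. h x \<partial>\<mu>) = (\<integral>\<^sup>+x. ennreal (c^d) * h (c *\<^sub>R x) \<partial>\<mu>)"
proof -
  have "ennreal (c^d) * ennreal ((1/c)^d) = 1"
    using c by (simp flip: ennreal_mult power_mult_distrib)
  then show ?thesis
    using c by (simp add: nn_integral_cmult measurable_mu_eq nn_integral_scaleR mult.assoc[symmetric])
qed

lemma sigma_finite_mu: "sigma_finite_measure \<mu>"
proof
  show "\<exists>A. countable A \<and> A \<subseteq> sets \<mu> \<and> \<Union> A = space \<mu> \<and> (\<forall>a\<in>A. emeasure \<mu> a \<noteq> \<infinity>)"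
  proof (intro exI[of _ "range (\<lambda>n::nat. ball (0::'a) (real (Suc n)))"] conjI)
    show "\<Union> (range (\<lambda>n::nat. ball (0::'a) (real (Suc n)))) = space \<mu>"
    proof -
      have "x \<in> ball 0 (real (Suc (nat \<lceil>norm x\<rceil>)))" for x :: 'a
        using le_of_int_ceiling[of "norm x"] by (simp add: mem_ball_0) linarith
      then have "x \<in> (\<Union>n. ball (0::'a) (real (Suc n)))" for x by blast
      then show ?thesis by auto
    qed
    show "\<forall>a\<in>range (\<lambda>n::nat. ball (0::'a) (real (Suc n))). emeasure \<mu> a \<noteq> \<infinity>"
    proof
      fix a assume "a \<in> range (\<lambda>n::nat. ball (0::'a) (real (Suc n)))"
      then obtain n where "a = ball 0 (real (Suc n))" by auto
      then show "emeasure \<mu> a \<noteq> \<infinity>" using emeasure_ball_finite[of "real (Suc n)"] by simp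
    qed
  qed (auto simp: sets_eq)
qed

end

lemma nn_integral_lborel_scaleR:
  fixes h :: "'a::euclidean_space \<Rightarrow> ennreal"
  assumes h[measurable]: "h \<in> borel_measurable borel" and c: "0 < c"
  shows "(\<integral>\<^sup>+y. h (c *\<^sub>R y) \<partial>lborel) = ennreal ((1/c)^DIM('a)) * (\<integral>\<^sup>+y. h y \<partial>lborel)"
proof -
  have "(\<integral>\<^sup>+y. h y \<partial>lborel) = (\<integral>\<^sup>+y. h y \<partial>(density (distr lborel borel (\<lambda>x. 0 + c *\<^sub>R x)) (\<lambda>_. \<bar>c\<bar>^DIM('a))))"
    using lborel_affine[of c 0] c by (subst (1) lborel_affine[of c 0]) auto
  also have "\<dots> = ennreal (c^DIM('a)) * (\<integral>\<^sup>+y. h (c *\<^sub>R y) \<partial>lborel)"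
    using c by (simp add: nn_integral_density nn_integral_distr nn_integral_cmult)
  finally have eq: "(\<integral>\<^sup>+y. h y \<partial>lborel) = ennreal (c^DIM('a)) * (\<integral>\<^sup>+y. h (c *\<^sub>R y) \<partial>lborel)" .
  have "ennreal ((1/c)^DIM('a)) * ennreal (c^DIM('a)) = 1"
    using c by (simp add: ennreal_mult[symmetric] power_mult_distrib[symmetric])
  then show ?thesis unfolding eq by (metis mult.assoc mult_1)
qed

lemma homogeneous_lborel: "homogeneous_measure (lborel :: 'a::euclidean_space measure) DIM('a)"
proof
  fix c :: real and A :: "'a set" assume c: "0 < c" and A: "A \<in> sets borel"
  have "emeasure lborel ((\<lambda>x. c *\<^sub>R x) -` A) = (\<integral>\<^sup>+y. indicator A (c *\<^sub>R y) \<partial>lborel)"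
    using A by (subst nn_integral_indicator[symmetric])
      (auto intro!: nn_integral_cong measurable_sets_borel[OF _ A] split: split_indicator)
  also have "\<dots> = ennreal ((1/c)^DIM('a)) * emeasure lborel A"
    using A c by (subst nn_integral_lborel_scaleR) auto
  finally show "emeasure lborel ((\<lambda>x. c *\<^sub>R x) -` A) = ennreal ((1/c)^DIM('a)) * emeasure lborel A" .
next
  show "emeasure lborel (ball (0::'a) 1) < \<infinity>" by (rule emeasure_lborel_ball_finite)
qed auto

lemma sph_lborel_eq_sphere_measure:
  "homogeneous_measure.sph lborel DIM('a) = (sphere_measure :: 'a::euclidean_space measure)"
  by (simp add: homogeneous_measure.sph_def[OF homogeneous_lborel] sphere_measure_def)

lemma sets_sphere_measure[simp, measurable_cong]:
  "sets (sphere_measure :: 'a::euclidean_space measure) = sets borel"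
  by (simp add: sphere_measure_def)

lemma space_sphere_measure[simp]: "space (sphere_measure :: 'a::euclidean_space measure) = UNIV"
  by (simp add: sphere_measure_def)

lemma finite_measure_sphere_measure: "finite_measure (sphere_measure :: 'a::euclidean_space measure)"
proof -
  interpret homogeneous_measure "lborel :: 'a measure" "DIM('a)" by (rule homogeneous_lborel)
  show ?thesis using sph.finite_measure_axioms by (simp add: sph_lborel_eq_sphere_measure)
qed

lemma AE_sphere_measure_norm_eq_1: "AE y in (sphere_measure :: 'a::euclidean_space measure). norm y = 1"
proof -
  interpret homogeneous_measure "lborel :: 'a measure" "DIM('a)" by (rule homogeneous_lborel)
  show ?thesis using AE_sph_norm_eq_1 unfolding sph_lborel_eq_sphere_measure .
qed

lemma nn_integral_lborel_cone:
  fixes G :: "'a::euclidean_space \<Rightarrow> ennreal"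
  assumes G[measurable]: "G \<in> borel_measurable borel" and r: "0 < r"
  shows "(\<integral>\<^sup>+v. ennreal (norm v ^ D) * indicator {..<r} (norm v) * G (v /\<^sub>R norm v) \<partial>lborel) =
    ennreal (r ^ (D + DIM('a)) / (D + DIM('a))) * (\<integral>\<^sup>+\<theta>. G \<theta> \<partial>sphere_measure)"
proof -
  interpret L: homogeneous_measure "lborel :: 'a measure" "DIM('a)" by (rule homogeneous_lborel)
  define I where "I = (\<integral>\<^sup>+\<theta>. G \<theta> \<partial>sphere_measure)"
  have "(\<integral>\<^sup>+v. ennreal (norm v ^ D) * indicator {..<r} (norm v) * G (v /\<^sub>R norm v) \<partial>lborel) =
      (\<integral>\<^sup>+s. ennreal (indicator {0<..} s * s^(DIM('a)-1)) * (\<integral>\<^sup>+\<theta>. ennreal (norm (s *\<^sub>R \<theta>) ^ D) *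
        indicator {..<r} (norm (s *\<^sub>R \<theta>)) * G ((s *\<^sub>R \<theta>) /\<^sub>R norm (s *\<^sub>R \<theta>)) \<partial>sphere_measure) \<partial>lborel)"
    by (subst L.nn_integral_polar) (simp_all add: sph_lborel_eq_sphere_measure)
  also have "\<dots> = (\<integral>\<^sup>+s. ennreal (indicator {0<..} s * s^(D + DIM('a) - 1)) * indicator {..<r} s * I \<partial>lborel)"
  proof (rule nn_integral_cong)
    fix s :: real
    show "ennreal (indicator {0<..} s * s^(DIM('a)-1)) * (\<integral>\<^sup>+\<theta>. ennreal (norm (s *\<^sub>R \<theta>) ^ D) *
        indicator {..<r} (norm (s *\<^sub>R \<theta>)) * G ((s *\<^sub>R \<theta>) /\<^sub>R norm (s *\<^sub>R \<theta>)) \<partial>sphere_measure) =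
      ennreal (indicator {0<..} s * s^(D + DIM('a) - 1)) * indicator {..<r} s * I"
    proof (cases "0 < s")
      case s: True
      have "(\<integral>\<^sup>+\<theta>. ennreal (norm (s *\<^sub>R \<theta>) ^ D) * indicator {..<r} (norm (s *\<^sub>R \<theta>)) *
          G ((s *\<^sub>R \<theta>) /\<^sub>R norm (s *\<^sub>R \<theta>)) \<partial>sphere_measure) =
          (\<integral>\<^sup>+\<theta>. (ennreal (s ^ D) * indicator {..<r} s) * G \<theta> \<partial>sphere_measure)"
        by (rule nn_integral_cong_AE) (use AE_sphere_measure_norm_eq_1 in eventually_elim, use s in simp)
      also have "\<dots> = ennreal (s ^ D) * indicator {..<r} s * I"
        by (simp add: I_def nn_integral_cmult)
      moreover have "ennreal (s ^ (DIM('a) - 1)) * ennreal (s ^ D) = ennreal (s ^ (D + DIM('a) - 1))"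
        using s DIM_positive[where 'a='a] by (simp flip: ennreal_mult power_add add: add.commute)
      ultimately show ?thesis
        using s by (simp add: mult.assoc[symmetric])
    qed simp
  qed
  also have "\<dots> = emeasure (radial_measure (D + DIM('a))) {..<r} * I"
    by (simp add: radial_measure_def emeasure_density nn_integral_multc)
  also have "\<dots> = ennreal (r ^ (D + DIM('a)) / (D + DIM('a))) * I"
    using r by (simp add: emeasure_radial_measure_lessThan)
  finally show ?thesis unfolding I_def .
qed

section \<open>Block coordinates\<close>

lemma borel_measurable_vec_lambda[measurable]:
  fixes f :: "'x \<Rightarrow> 'm::finite \<Rightarrow> 'a::euclidean_space"
  assumes "\<And>j. (\<lambda>x. f x j) \<in> borel_measurable M"
  shows "(\<lambda>x. \<chi> j. f x j) \<in> borel_measurable M"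
proof (subst borel_measurable_euclidean_space, intro ballI)
  fix b :: "'a^'m" assume "b \<in> Basis"
  then obtain j e where b: "b = axis j e" "e \<in> Basis" by (auto simp: Basis_vec_def)
  show "(\<lambda>x. (\<chi> j. f x j) \<bullet> b) \<in> borel_measurable M"
    unfolding b inner_axis vec_lambda_beta by (intro borel_measurable_inner assms borel_measurable_const)
qed

lemma borel_measurable_vec_nth[measurable]:
  "(\<lambda>z::'a::euclidean_space^'m::finite. z $ j) \<in> borel_measurable borel"
proof (subst borel_measurable_euclidean_space, intro ballI)
  fix e :: 'a assume "e \<in> Basis"
  have "(\<lambda>z::'a^'m. z $ j \<bullet> e) = (\<lambda>z. z \<bullet> axis j e)" by (simp add: inner_axis)
  then show "(\<lambda>z::'a^'m. z $ j \<bullet> e) \<in> borel_measurable borel" by simp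
qed

lemma prod_Basis_vec:
  "(\<Prod>b\<in>(Basis::('a::euclidean_space^'m::finite) set). F b) = (\<Prod>j\<in>UNIV. \<Prod>e\<in>Basis. F (axis j e))"
proof -
  have eq: "(Basis::('a^'m) set) = (\<Union>j\<in>UNIV. (\<lambda>e. axis j e) ` Basis)"
    by (auto simp: Basis_vec_def)
  have "(\<Prod>b\<in>(Basis::('a^'m) set). F b) = (\<Prod>j\<in>UNIV. \<Prod>b\<in>(\<lambda>e. axis j e) ` Basis. F b)"
    unfolding eq by (rule prod.UNION_disjoint) (auto simp: axis_eq_axis nonzero_Basis)
  also have "\<dots> = (\<Prod>j\<in>UNIV. \<Prod>e\<in>Basis. F (axis j e))"
    by (intro prod.cong refl, subst prod.reindex) (auto simp: inj_on_def axis_eq_axis nonzero_Basis)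
  finally show ?thesis .
qed

lemma lborel_vec_eq_distr_PiM:
  "(lborel :: ('a::euclidean_space^'m::finite) measure) =
    distr (PiM UNIV (\<lambda>_. lborel::'a measure)) borel (\<lambda>g. \<chi> j. g j)"
proof (rule lborel_eqI)
  interpret product_sigma_finite "\<lambda>_. lborel::'a measure" by standard
  fix l u :: "'a^'m"
  assume le: "\<And>b. b \<in> Basis \<Longrightarrow> l \<bullet> b \<le> u \<bullet> b"
  have le': "l $ j \<bullet> e \<le> u $ j \<bullet> e" if "e \<in> Basis" for j e
    using le[of "axis j e"] that by (simp add: inner_axis)
  have pre: "(\<lambda>g. \<chi> j. g j) -` box l u \<inter> space (PiM UNIV (\<lambda>_. lborel::'a measure)) =
     PiE UNIV (\<lambda>j. box (l $ j) (u $ j))"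
    by (auto simp: space_PiM mem_box Basis_vec_def inner_axis PiE_iff extensional_def)
  have "emeasure (distr (PiM UNIV (\<lambda>_. lborel::'a measure)) borel (\<lambda>g. \<chi> j. g j)) (box l u) =
     emeasure (PiM UNIV (\<lambda>_. lborel::'a measure)) (PiE UNIV (\<lambda>j. box (l $ j) (u $ j)))"
    by (subst emeasure_distr) (auto simp: pre)
  also have "\<dots> = (\<Prod>j\<in>UNIV. emeasure lborel (box (l $ j) (u $ j)))"
    by (rule emeasure_PiM) auto
  also have "\<dots> = (\<Prod>j\<in>UNIV. ennreal (\<Prod>e\<in>Basis. (u $ j - l $ j) \<bullet> e))"
    using le' by (intro prod.cong refl) (simp add: inner_diff_left)
  also have "\<dots> = ennreal (\<Prod>j\<in>UNIV. \<Prod>e\<in>Basis. (u $ j - l $ j) \<bullet> e)"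
    using le' by (intro prod_ennreal prod_nonneg) (auto simp: inner_diff_left)
  also have "\<dots> = (\<Prod>b\<in>Basis. (u - l) \<bullet> b)"
    by (simp add: prod_Basis_vec inner_axis)
  finally show "emeasure (distr (PiM UNIV (\<lambda>_. lborel::'a measure)) borel (\<lambda>g. \<chi> j. g j)) (box l u) =
      (\<Prod>b\<in>Basis. (u - l) \<bullet> b)" .
qed simp

lemma nn_integral_PiM_lborel_scaleR:
  fixes I :: "'i set"
  assumes I: "finite I" and c: "0 < c"
  shows "f \<in> borel_measurable (PiM I (\<lambda>_. lborel::'a::euclidean_space measure)) \<Longrightarrow>
     (\<integral>\<^sup>+g. f (\<lambda>j\<in>I. c *\<^sub>R g j) \<partial>PiM I (\<lambda>_. lborel)) =
     ennreal ((1/c)^DIM('a))^card I * (\<integral>\<^sup>+g. f g \<partial>PiM I (\<lambda>_. lborel))"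
  using I
proof (induction I arbitrary: f rule: finite_induct)
  case empty
  then show ?case
    by (simp add: PiM_empty nn_integral_count_space_finite)
next
  case (insert i I)
  interpret product_sigma_finite "\<lambda>_. lborel :: 'a measure" by standard
  let ?k = "ennreal ((1/c)^DIM('a))"
  note [measurable] = insert.prems
  define F where "F = (\<lambda>z. \<integral>\<^sup>+y. f (z(i := y)) \<partial>(lborel::'a measure))"
  have Fm[measurable]: "F \<in> borel_measurable (PiM I (\<lambda>_. lborel))"
    unfolding F_def by measurable
  have "(\<integral>\<^sup>+g. f (\<lambda>j\<in>insert i I. c *\<^sub>R g j) \<partial>PiM (insert i I) (\<lambda>_. lborel)) =
     (\<integral>\<^sup>+x. \<integral>\<^sup>+y. f (\<lambda>j\<in>insert i I. c *\<^sub>R (x(i := y)) j) \<partial>lborel \<partial>PiM I (\<lambda>_. lborel))"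
    using insert by (subst product_nn_integral_insert) auto
  also have "\<dots> = (\<integral>\<^sup>+x. \<integral>\<^sup>+y. f ((\<lambda>j\<in>I. c *\<^sub>R x j)(i := c *\<^sub>R y)) \<partial>lborel \<partial>PiM I (\<lambda>_. lborel))"
    using insert
    by (intro nn_integral_cong arg_cong[where f=f]) (auto simp: fun_eq_iff)
  also have "\<dots> = (\<integral>\<^sup>+x. ?k * F (\<lambda>j\<in>I. c *\<^sub>R x j) \<partial>PiM I (\<lambda>_. lborel))"
    unfolding F_def using c
    by (intro nn_integral_cong, subst nn_integral_lborel_scaleR) auto
  also have "\<dots> = ?k * (\<integral>\<^sup>+x. F (\<lambda>j\<in>I. c *\<^sub>R x j) \<partial>PiM I (\<lambda>_. lborel))"
    by (subst nn_integral_cmult) auto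
  also have "\<dots> = ?k * (?k ^ card I * (\<integral>\<^sup>+x. F x \<partial>PiM I (\<lambda>_. lborel)))"
    using insert.IH[OF Fm] by (simp add: restrict_def)
  also have "\<dots> = ?k ^ card (insert i I) * (\<integral>\<^sup>+g. f g \<partial>PiM (insert i I) (\<lambda>_. lborel))"
    using insert unfolding F_def by (subst product_nn_integral_insert) (auto simp: mult.assoc)
  finally show ?case .
qed

definition vec_except :: "'m::finite \<Rightarrow> ('m \<Rightarrow> 'a::euclidean_space) \<Rightarrow> 'a^'m" where
  "vec_except k g = (\<chi> j. if j = k then 0 else g j)"

definition vec_block :: "'m::finite \<Rightarrow> 'a::euclidean_space \<Rightarrow> 'a^'m" where
  "vec_block k v = (\<chi> j. if j = k then v else 0)"

definition lborel_except :: "'m::finite \<Rightarrow> ('a::euclidean_space^'m) measure" where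
  "lborel_except k = distr (PiM (UNIV - {k}) (\<lambda>_. lborel)) borel (vec_except k)"

lemma borel_measurable_vec_except[measurable]:
  "vec_except k \<in> borel_measurable (PiM (UNIV - {k}) (\<lambda>_. lborel::'a::euclidean_space measure))"
  unfolding vec_except_def
proof (rule borel_measurable_vec_lambda)
  fix j show "(\<lambda>x. if j = k then 0 else x j) \<in> borel_measurable (PiM (UNIV - {k}) (\<lambda>_. lborel::'a measure))"
    by (cases "j = k") auto
qed

lemma borel_measurable_vec_block[measurable]: "vec_block k \<in> borel_measurable borel"
  unfolding vec_block_def by measurable

lemma sets_lborel_except[simp, measurable_cong]: "sets (lborel_except k) = sets borel"
  by (simp add: lborel_except_def)

lemma space_lborel_except[simp]: "space (lborel_except k) = UNIV"
  by (simp add: lborel_except_def)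

lemma nn_integral_lborel_except:
  assumes [measurable]: "h \<in> borel_measurable borel"
  shows "(\<integral>\<^sup>+w. h w \<partial>lborel_except k) = (\<integral>\<^sup>+g. h (vec_except k g) \<partial>PiM (UNIV - {k}) (\<lambda>_. lborel))"
  unfolding lborel_except_def by (simp add: nn_integral_distr)

lemma AE_lborel_except: "AE w in lborel_except k. w $ k = 0"
  unfolding lborel_except_def by (subst AE_distr_iff) (auto simp: vec_except_def)

lemma scaleR_vec_except: "c *\<^sub>R vec_except k g = vec_except k (\<lambda>j\<in>UNIV - {k}. c *\<^sub>R g j)"
  by (auto simp: vec_except_def vec_eq_iff)

lemma vec_block_scaleR: "vec_block k (c *\<^sub>R v) = c *\<^sub>R vec_block k v"
  by (auto simp: vec_block_def vec_eq_iff)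

lemma norm_le_norm_vec_except: "j \<noteq> k \<Longrightarrow> norm (g j) \<le> norm (vec_except k g)"
  using Finite_Cartesian_Product.norm_nth_le[of "vec_except k g" j] by (simp add: vec_except_def)

lemma norm_vec_power2: "norm (x::'a::real_normed_vector^'m::finite) ^ 2 = (\<Sum>j\<in>UNIV. norm (x $ j) ^ 2)"
  unfolding norm_vec_def L2_set_def by (simp add: sum_nonneg)

lemma norm_add_vec_block:
  assumes "w $ k = 0"
  shows "norm (w + vec_block k v) ^ 2 = norm w ^ 2 + norm v ^ 2"
proof -
  have "norm (w + vec_block k v) ^ 2 = (\<Sum>j\<in>UNIV. norm ((w + vec_block k v) $ j) ^ 2)" by (rule norm_vec_power2)
  also have "\<dots> = norm v ^ 2 + (\<Sum>j\<in>UNIV - {k}. norm ((w + vec_block k v) $ j) ^ 2)"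
    by (subst sum.remove[of _ k]) (auto simp: vec_block_def assms)
  also have "(\<Sum>j\<in>UNIV - {k}. norm ((w + vec_block k v) $ j) ^ 2) = (\<Sum>j\<in>UNIV - {k}. norm (w $ j) ^ 2)"
    by (intro sum.cong) (auto simp: vec_block_def)
  finally have eq1: "norm (w + vec_block k v) ^ 2 = norm v ^ 2 + (\<Sum>j\<in>UNIV - {k}. norm (w $ j) ^ 2)" .
  have "norm w ^ 2 = (\<Sum>j\<in>UNIV - {k}. norm (w $ j) ^ 2)"
    by (subst norm_vec_power2, subst sum.remove[of _ k]) (auto simp: assms)
  then show ?thesis using eq1 by simp
qed

lemma norm_scaleR_add_vec_block:
  assumes "w $ k = 0"
  shows "norm (norm v *\<^sub>R w + vec_block k v) = norm v * sqrt (1 + norm w ^ 2)"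
proof (rule power2_eq_imp_eq)
  have "(norm v *\<^sub>R w) $ k = 0" using assms by simp
  from norm_add_vec_block[OF this, of v]
  show "norm (norm v *\<^sub>R w + vec_block k v) ^ 2 = (norm v * sqrt (1 + norm w ^ 2)) ^ 2"
    by (simp add: power_mult_distrib algebra_simps)
qed simp_all

lemma normalize_scaleR_add_vec_block:
  assumes "w $ k = 0" "v \<noteq> 0"
  shows "(norm v *\<^sub>R w + vec_block k v) /\<^sub>R norm (norm v *\<^sub>R w + vec_block k v) =
    (w + vec_block k (v /\<^sub>R norm v)) /\<^sub>R sqrt (1 + norm w ^ 2)"
proof -
  have "norm v *\<^sub>R w + vec_block k v = norm v *\<^sub>R (w + vec_block k (v /\<^sub>R norm v))"
    using assms(2) by (simp add: scaleR_add_right flip: vec_block_scaleR)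
  moreover have "0 < norm v" using assms(2) by simp
  ultimately show ?thesis
    unfolding norm_scaleR_add_vec_block[OF assms(1)] by simp
qed

lemma nn_integral_lborel_vec_split:
  fixes \<Phi> :: "'a::euclidean_space^'m::finite \<Rightarrow> ennreal"
  assumes [measurable]: "\<Phi> \<in> borel_measurable borel"
  shows "(\<integral>\<^sup>+z. \<Phi> z \<partial>lborel) = (\<integral>\<^sup>+w. (\<integral>\<^sup>+v. \<Phi> (w + vec_block k v) \<partial>lborel) \<partial>lborel_except k)"
proof -
  interpret product_sigma_finite "\<lambda>_. lborel::'a measure" by standard
  have m1: "(\<lambda>g. \<Phi> (\<chi> j. g j)) \<in> borel_measurable (PiM UNIV (\<lambda>_. lborel::'a measure))"
    by measurable
  have "(\<integral>\<^sup>+z. \<Phi> z \<partial>lborel) = (\<integral>\<^sup>+g. \<Phi> (\<chi> j. g j) \<partial>PiM UNIV (\<lambda>_. lborel::'a measure))"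
    by (subst lborel_vec_eq_distr_PiM) (simp add: nn_integral_distr m1)
  also have "\<dots> = (\<integral>\<^sup>+g. \<Phi> (\<chi> j. g j) \<partial>PiM (insert k (UNIV - {k})) (\<lambda>_. lborel::'a measure))"
    by (simp add: insert_absorb)
  also have "\<dots> = (\<integral>\<^sup>+x. \<integral>\<^sup>+y. \<Phi> (\<chi> j. (x(k := y)) j) \<partial>lborel \<partial>PiM (UNIV-{k}) (\<lambda>_. lborel::'a measure))"
    using m1 by (subst product_nn_integral_insert) (auto simp: insert_absorb)
  also have "\<dots> = (\<integral>\<^sup>+x. (\<lambda>w. \<integral>\<^sup>+v. \<Phi> (w + vec_block k v) \<partial>lborel) (vec_except k x)
      \<partial>PiM (UNIV-{k}) (\<lambda>_. lborel::'a measure))"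
    by (intro nn_integral_cong arg_cong[where f=\<Phi>]) (auto simp: vec_except_def vec_block_def vec_eq_iff)
  also have "\<dots> = (\<integral>\<^sup>+w. (\<integral>\<^sup>+v. \<Phi> (w + vec_block k v) \<partial>lborel) \<partial>lborel_except k)"
    unfolding lborel_except_def by (subst nn_integral_distr) auto
  finally show ?thesis .
qed

lemma homogeneous_lborel_except:
  assumes m2: "2 \<le> CARD('m::finite)"
  shows "homogeneous_measure (lborel_except k :: ('a::euclidean_space^'m) measure) (DIM('a) * (CARD('m) - 1))"
proof
  let ?P = "PiM (UNIV - {k}) (\<lambda>_. lborel::'a measure)"
  interpret product_sigma_finite "\<lambda>_. lborel::'a measure" by standard
  show "sets (lborel_except k :: ('a^'m) measure) = sets borel" by simp
  show "0 < DIM('a) * (CARD('m) - 1)" using m2 by simp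
  fix c :: real and A :: "('a^'m) set" assume c: "0 < c" and A[measurable]: "A \<in> sets borel"
  have "emeasure (lborel_except k) ((\<lambda>x. c *\<^sub>R x) -` A) = (\<integral>\<^sup>+w. indicator A (c *\<^sub>R w) \<partial>lborel_except k)"
    by (subst nn_integral_indicator[symmetric])
       (auto intro!: nn_integral_cong measurable_sets_borel[OF _ A] split: split_indicator)
  also have "\<dots> = (\<integral>\<^sup>+g. indicator A (vec_except k (\<lambda>j\<in>UNIV - {k}. c *\<^sub>R g j)) \<partial>?P)"
    by (simp add: nn_integral_lborel_except scaleR_vec_except)
  also have "\<dots> = ennreal ((1/c)^DIM('a))^card (UNIV - {k}) * (\<integral>\<^sup>+g. indicator A (vec_except k g) \<partial>?P)"
    using c by (subst nn_integral_PiM_lborel_scaleR[where f="\<lambda>g. indicator A (vec_except k g)"]) auto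
  also have "(\<integral>\<^sup>+g. indicator A (vec_except k g) \<partial>?P) = emeasure (lborel_except k) A"
    by (simp add: nn_integral_lborel_except[symmetric])
  also have "ennreal ((1/c)^DIM('a))^card (UNIV - {k}) = ennreal ((1/c)^(DIM('a) * (CARD('m) - 1)))"
    using c by (simp add: card_Diff_singleton ennreal_power power_mult)
  finally show "emeasure (lborel_except k) ((\<lambda>x. c *\<^sub>R x) -` A) =
      ennreal ((1 / c) ^ (DIM('a) * (CARD('m) - 1))) * emeasure (lborel_except k) A" .
next
  let ?P = "PiM (UNIV - {k}) (\<lambda>_. lborel::'a measure)"
  interpret product_sigma_finite "\<lambda>_. lborel::'a measure" by standard
  have "emeasure (lborel_except k :: ('a^'m) measure) (ball 0 1) =
      (\<integral>\<^sup>+w. indicator (ball (0::'a^'m) 1) w \<partial>lborel_except k)"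
    by simp
  also have "\<dots> = (\<integral>\<^sup>+g. indicator (ball 0 1) (vec_except k g) \<partial>?P)"
    by (rule nn_integral_lborel_except) (intro borel_measurable_indicator borel_open open_ball)
  also have "\<dots> \<le> (\<integral>\<^sup>+g. indicator (PiE (UNIV - {k}) (\<lambda>_. ball 0 1)) g \<partial>?P)"
  proof (rule nn_integral_mono)
    fix g assume "g \<in> space ?P"
    moreover have "g j \<in> ball 0 1" if "j \<in> UNIV - {k}" "vec_except k g \<in> ball 0 1" for j
      using norm_le_norm_vec_except[of j k g] that by simp
    ultimately show "indicator (ball 0 1) (vec_except k g) \<le>
        (indicator (PiE (UNIV - {k}) (\<lambda>_. ball 0 1)) g :: ennreal)"
      by (auto simp: space_PiM PiE_iff split: split_indicator)
  qed
  also have "\<dots> = (\<Prod>j\<in>UNIV - {k}. emeasure lborel (ball (0::'a) 1))"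
    by (simp add: emeasure_PiM sets_PiM_I_finite)
  also have "\<dots> < \<infinity>"
    using emeasure_lborel_ball_finite[of "0::'a" 1] by (simp add: power_less_top_ennreal)
  finally show "emeasure (lborel_except k :: ('a^'m) measure) (ball 0 1) < \<infinity>" .
qed

section \<open>Slicing the unit sphere of \<open>'a^'m\<close>\<close>

text \<open>The substitution \<open>w \<mapsto> |v| w\<close> straightens the slice of the cone through \<open>e\<^sub>k v\<close>.\<close>
lemma nn_integral_lborel_except_cone_slice:
  fixes G :: "'a::euclidean_space^'m::finite \<Rightarrow> ennreal"
  assumes m2: "2 \<le> CARD('m)" and [measurable]: "G \<in> borel_measurable borel" and v: "v \<noteq> 0"
  shows "(\<integral>\<^sup>+w. indicator (ball 0 1 - {0}) (w + vec_block k v) *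
      G ((w + vec_block k v) /\<^sub>R norm (w + vec_block k v)) \<partial>lborel_except k) =
    (\<integral>\<^sup>+w. ennreal (norm v ^ (DIM('a) * (CARD('m) - 1))) * indicator {..<1} (norm v * sqrt (1 + norm w ^ 2)) *
      G ((w + vec_block k (v /\<^sub>R norm v)) /\<^sub>R sqrt (1 + norm w ^ 2)) \<partial>lborel_except k)"
    (is "_ = (\<integral>\<^sup>+w. ?\<Xi> w \<partial>lborel_except k)")
proof -
  define d where "d = DIM('a) * (CARD('m) - 1)"
  interpret homogeneous_measure "lborel_except k :: ('a^'m) measure" d
    unfolding d_def by (rule homogeneous_lborel_except[OF m2])
  define \<Psi> where "\<Psi> z = indicator (ball 0 1 - {0}) z * G (z /\<^sub>R norm z)" for z :: "'a^'m"
  have "(\<integral>\<^sup>+w. \<Psi> (w + vec_block k v) \<partial>lborel_except k) =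
      (\<integral>\<^sup>+w. ennreal (norm v ^ d) * \<Psi> (norm v *\<^sub>R w + vec_block k v) \<partial>lborel_except k)"
    using v by (intro nn_integral_scaleR_eq) (simp_all add: \<Psi>_def)
  also have "\<dots> = (\<integral>\<^sup>+w. ?\<Xi> w \<partial>lborel_except k)"
  proof (rule nn_integral_cong_AE)
    show "AE w in lborel_except k. ennreal (norm v ^ d) * \<Psi> (norm v *\<^sub>R w + vec_block k v) = ?\<Xi> w"
      using AE_lborel_except
    proof eventually_elim
      fix w :: "'a^'m" assume w: "w $ k = 0"
      have "norm (norm v *\<^sub>R w + vec_block k v) = norm v * sqrt (1 + norm w ^ 2)"
        by (rule norm_scaleR_add_vec_block[OF w])
      moreover have "0 < norm v * sqrt (1 + norm w ^ 2)" using v by (simp add: add_pos_nonneg)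
      ultimately have "norm v *\<^sub>R w + vec_block k v \<in> ball 0 1 - {0} \<longleftrightarrow>
          norm v * sqrt (1 + norm w ^ 2) \<in> {..<1}"
        by (auto simp: mem_ball_0)
      then show "ennreal (norm v ^ d) * \<Psi> (norm v *\<^sub>R w + vec_block k v) = ?\<Xi> w"
        unfolding \<Psi>_def d_def normalize_scaleR_add_vec_block[OF w v] by (simp add: indicator_def)
    qed
  qed
  finally show ?thesis by (simp add: \<Psi>_def)
qed

lemma nn_integral_sphere_measure_slice:
  fixes \<Phi> :: "'a::euclidean_space^'m::finite \<Rightarrow> ennreal" and k :: 'm
  assumes m2: "2 \<le> CARD('m)" and \<Phi>[measurable]: "\<Phi> \<in> borel_measurable borel"
  shows "(\<integral>\<^sup>+y. \<Phi> y \<partial>sphere_measure) =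
    (\<integral>\<^sup>+w. ennreal (sqrt (1 + norm w ^ 2) powr - real DIM('a^'m)) *
       (\<integral>\<^sup>+\<theta>. \<Phi> ((w + vec_block k \<theta>) /\<^sub>R sqrt (1 + norm w ^ 2)) \<partial>sphere_measure) \<partial>lborel_except k)"
proof -
  define d where "d = DIM('a) * (CARD('m) - 1)"
  define N where "N = DIM('a^'m)"
  have N: "N = d + DIM('a)" using m2 by (simp add: N_def d_def algebra_simps)
  interpret U: homogeneous_measure "lborel_except k :: ('a^'m) measure" d
    unfolding d_def by (rule homogeneous_lborel_except[OF m2])
  interpret P: pair_sigma_finite "lborel_except k :: ('a^'m) measure" "lborel :: 'a measure"
    by (intro pair_sigma_finite.intro U.sigma_finite_mu lborel.sigma_finite_measure_axioms)
  define \<rho> where "\<rho> w = sqrt (1 + norm w ^ 2)" for w :: "'a^'m"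
  have \<rho>_pos: "0 < \<rho> w" for w by (simp add: \<rho>_def add_pos_nonneg)
  define G where "G w \<theta> = of_nat N * \<Phi> ((w + vec_block k \<theta>) /\<^sub>R \<rho> w)" for w \<theta>
  define \<Psi> where "\<Psi> z = indicator (ball 0 1 - {0}) z * (of_nat N * \<Phi> (z /\<^sub>R norm z))" for z :: "'a^'m"
  define \<Xi> where "\<Xi> w v = ennreal (norm v ^ d) * indicator {..<1} (norm v * \<rho> w) * G w (v /\<^sub>R norm v)"
    for w v
  have [measurable]: "\<Psi> \<in> borel_measurable borel" unfolding \<Psi>_def by measurable
  have [measurable]: "(\<lambda>(w, v). \<Xi> w v) \<in> borel_measurable (lborel_except k \<Otimes>\<^sub>M lborel)"
    unfolding \<Xi>_def G_def \<rho>_def by measurable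
  have slice: "(\<integral>\<^sup>+w. \<Psi> (w + vec_block k v) \<partial>lborel_except k) = (\<integral>\<^sup>+w. \<Xi> w v \<partial>lborel_except k)"
    if "v \<noteq> 0" for v
    unfolding \<Psi>_def \<Xi>_def G_def \<rho>_def d_def
    by (rule nn_integral_lborel_except_cone_slice[OF m2 _ that]) measurable
  have cone: "(\<integral>\<^sup>+v. \<Xi> w v \<partial>lborel) =
      ennreal (\<rho> w powr - real N) * (\<integral>\<^sup>+\<theta>. \<Phi> ((w + vec_block k \<theta>) /\<^sub>R \<rho> w) \<partial>sphere_measure)" for w
  proof -
    have ind: "indicator {..<1} (norm v * \<rho> w) = (indicator {..<1 / \<rho> w} (norm v) :: ennreal)" for v :: 'a
      using \<rho>_pos[of w] by (simp add: indicator_def pos_less_divide_eq)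
    have "(\<integral>\<^sup>+v. \<Xi> w v \<partial>lborel) = ennreal ((1 / \<rho> w) ^ N / N) * (\<integral>\<^sup>+\<theta>. G w \<theta> \<partial>sphere_measure)"
      unfolding \<Xi>_def ind N using \<rho>_pos[of w] by (intro nn_integral_lborel_cone) (simp_all add: G_def \<rho>_def)
    also have "\<dots> = ennreal ((1 / \<rho> w) ^ N / N) * of_nat N *
        (\<integral>\<^sup>+\<theta>. \<Phi> ((w + vec_block k \<theta>) /\<^sub>R \<rho> w) \<partial>sphere_measure)"
      by (simp add: G_def nn_integral_cmult mult.assoc)
    also have "ennreal ((1 / \<rho> w) ^ N / N) * of_nat N = ennreal (\<rho> w powr - real N)"
    proof -
      have "0 < N" by (simp add: N_def)
      then have "(1 / \<rho> w) ^ N / N * N = \<rho> w powr - real N"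
        using \<rho>_pos[of w] by (simp add: powr_minus powr_realpow power_one_over inverse_eq_divide)
      then show ?thesis
        using \<rho>_pos[of w] by (simp add: ennreal_of_nat_eq_real_of_nat flip: ennreal_mult)
    qed
    finally show ?thesis .
  qed
  have "(\<integral>\<^sup>+y. \<Phi> y \<partial>sphere_measure) = (\<integral>\<^sup>+z. \<Psi> z \<partial>lborel)"
    unfolding sphere_measure_def \<Psi>_def N_def
    by (subst nn_integral_distr) (auto simp: nn_integral_density mult.assoc)
  also have "\<dots> = (\<integral>\<^sup>+w. (\<integral>\<^sup>+v. \<Psi> (w + vec_block k v) \<partial>lborel) \<partial>lborel_except k)"
    by (rule nn_integral_lborel_vec_split) simp
  also have "\<dots> = (\<integral>\<^sup>+v. (\<integral>\<^sup>+w. \<Psi> (w + vec_block k v) \<partial>lborel_except k) \<partial>lborel)"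
    by (rule P.Fubini'[where f="\<lambda>w v. \<Psi> (w + vec_block k v)", symmetric]) measurable
  also have "\<dots> = (\<integral>\<^sup>+v. (\<integral>\<^sup>+w. \<Xi> w v \<partial>lborel_except k) \<partial>lborel)"
    by (rule nn_integral_cong_AE) (use AE_lborel_singleton[of "0::'a"] slice in auto)
  also have "\<dots> = (\<integral>\<^sup>+w. (\<integral>\<^sup>+v. \<Xi> w v \<partial>lborel) \<partial>lborel_except k)"
    by (rule P.Fubini'[where f="\<lambda>w v. \<Xi> w v"]) measurable
  finally show ?thesis unfolding cone \<rho>_def N_def .
qed

lemma sphere_measure_slice:
  fixes k :: "'m::finite"
  assumes m2: "2 \<le> CARD('m)"
  shows "(sphere_measure :: ('a::euclidean_space^'m) measure) =
    distr (density (lborel_except k \<Otimes>\<^sub>M (sphere_measure :: 'a measure))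
        (\<lambda>(w, \<theta>). ennreal (sqrt (1 + norm w ^ 2) powr - real DIM('a^'m))))
      borel (\<lambda>(w, \<theta>). (w + vec_block k \<theta>) /\<^sub>R sqrt (1 + norm w ^ 2))"
    (is "_ = distr (density ?P ?g) borel ?T")
proof (rule measure_eqI)
  interpret U: homogeneous_measure "lborel_except k :: ('a^'m) measure" "DIM('a) * (CARD('m) - 1)"
    by (rule homogeneous_lborel_except[OF m2])
  interpret S: finite_measure "sphere_measure :: 'a measure" by (rule finite_measure_sphere_measure)
  interpret P: pair_sigma_finite "lborel_except k :: ('a^'m) measure" "sphere_measure :: 'a measure"
    by (intro pair_sigma_finite.intro U.sigma_finite_mu S.sigma_finite_measure_axioms)
  fix A :: "('a^'m) set" assume "A \<in> sets (sphere_measure :: ('a^'m) measure)"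
  then have A[measurable]: "A \<in> sets borel" by simp
  have Tm[measurable]: "?T \<in> ?P \<rightarrow>\<^sub>M borel" by measurable
  have [measurable]: "?g \<in> borel_measurable ?P" by measurable
  have "emeasure (sphere_measure :: ('a^'m) measure) A = (\<integral>\<^sup>+y. indicator A y \<partial>sphere_measure)"
    by simp
  also have "\<dots> = (\<integral>\<^sup>+w. ennreal (sqrt (1 + norm w ^ 2) powr - real DIM('a^'m)) *
       (\<integral>\<^sup>+\<theta>. indicator A ((w + vec_block k \<theta>) /\<^sub>R sqrt (1 + norm w ^ 2)) \<partial>sphere_measure) \<partial>lborel_except k)"
    by (rule nn_integral_sphere_measure_slice[OF m2]) simp
  also have "\<dots> = (\<integral>\<^sup>+w. (\<integral>\<^sup>+\<theta>. ?g (w, \<theta>) * indicator A (?T (w, \<theta>)) \<partial>sphere_measure) \<partial>lborel_except k)"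
    unfolding prod.case by (intro nn_integral_cong, subst nn_integral_cmult) auto
  also have "\<dots> = (\<integral>\<^sup>+p. ?g p * indicator A (?T p) \<partial>?P)"
  proof -
    have "(\<lambda>p. ?g p * indicator A (?T p)) \<in> borel_measurable ?P" by measurable
    from S.nn_integral_fst[OF this] show ?thesis by simp
  qed
  also have "\<dots> = emeasure (density ?P ?g) (?T -` A \<inter> space ?P)"
  proof -
    have Sm: "?T -` A \<inter> space ?P \<in> sets ?P" by (rule measurable_sets[OF Tm A])
    show ?thesis using Sm by (subst emeasure_density) (auto intro!: nn_integral_cong split: split_indicator)
  qed
  also have "\<dots> = emeasure (distr (density ?P ?g) borel ?T) A"
    by (subst emeasure_distr) auto
  finally show "emeasure (sphere_measure :: ('a^'m) measure) A = emeasure (distr (density ?P ?g) borel ?T) A" .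
qed simp

lemma norm_integral_sphere_measure_slice_le:
  fixes F :: "'a::euclidean_space^'m::finite \<Rightarrow> complex" and k :: 'm
  assumes m2: "2 \<le> CARD('m)" and F[measurable]: "F \<in> borel_measurable borel"
    and bnd: "\<And>y. norm (F y) \<le> B"
  shows "ennreal (norm (\<integral>y. F y \<partial>sphere_measure)) \<le>
    (\<integral>\<^sup>+w. ennreal (sqrt (1 + norm w ^ 2) powr - real DIM('a^'m)) *
       ennreal (norm (\<integral>\<theta>. F ((w + vec_block k \<theta>) /\<^sub>R sqrt (1 + norm w ^ 2)) \<partial>sphere_measure)) \<partial>lborel_except k)"
proof -
  interpret U: homogeneous_measure "lborel_except k :: ('a^'m) measure" "DIM('a) * (CARD('m) - 1)"
    by (rule homogeneous_lborel_except[OF m2])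
  interpret S: finite_measure "sphere_measure :: 'a measure" by (rule finite_measure_sphere_measure)
  interpret P: pair_sigma_finite "lborel_except k :: ('a^'m) measure" "sphere_measure :: 'a measure"
    by (intro pair_sigma_finite.intro U.sigma_finite_mu S.sigma_finite_measure_axioms)
  interpret SV: finite_measure "sphere_measure :: ('a^'m) measure" by (rule finite_measure_sphere_measure)
  let ?P = "lborel_except k \<Otimes>\<^sub>M (sphere_measure :: 'a measure)"
  define \<gamma> where "\<gamma> w = sqrt (1 + norm w ^ 2) powr - real DIM('a^'m)" for w :: "'a^'m"
  define T where "T w \<theta> = (w + vec_block k \<theta>) /\<^sub>R sqrt (1 + norm w ^ 2)" for w :: "'a^'m" and \<theta> :: 'a
  have [measurable]: "(\<lambda>p. T (fst p) (snd p)) \<in> ?P \<rightarrow>\<^sub>M borel" "\<gamma> \<in> borel_measurable borel"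
    unfolding T_def \<gamma>_def by measurable
  have M: "(sphere_measure :: ('a^'m) measure) =
      distr (density ?P (\<lambda>p. ennreal (\<gamma> (fst p)))) borel (\<lambda>p. T (fst p) (snd p))"
    using sphere_measure_slice[OF m2, of k, where 'a='a] by (simp add: \<gamma>_def T_def case_prod_beta')
  have "integrable (sphere_measure :: ('a^'m) measure) F"
    using bnd by (intro SV.integrable_const_bound[where B=B]) auto
  then have int: "integrable ?P (\<lambda>p. \<gamma> (fst p) *\<^sub>R F (T (fst p) (snd p)))"
    unfolding M by (simp add: integrable_distr_eq integrable_density \<gamma>_def)
  have "(\<integral>y. F y \<partial>sphere_measure) = (\<integral>p. \<gamma> (fst p) *\<^sub>R F (T (fst p) (snd p)) \<partial>?P)"
    by (subst M) (simp add: integral_distr integral_density \<gamma>_def)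
  also have "\<dots> = (\<integral>w. \<gamma> w *\<^sub>R (\<integral>\<theta>. F (T w \<theta>) \<partial>sphere_measure) \<partial>lborel_except k)"
    by (simp add: P.integral_fst'[OF int, symmetric])
  finally have eq: "(\<integral>y. F y \<partial>sphere_measure) =
      (\<integral>w. \<gamma> w *\<^sub>R (\<integral>\<theta>. F (T w \<theta>) \<partial>sphere_measure) \<partial>lborel_except k)" .
  have "integrable (lborel_except k) (\<lambda>w. \<gamma> w *\<^sub>R (\<integral>\<theta>. F (T w \<theta>) \<partial>sphere_measure))"
    using P.integrable_fst'[OF int] by simp
  from integral_norm_bound_ennreal[OF this]
  have "ennreal (norm (\<integral>y. F y \<partial>sphere_measure)) \<le>
      (\<integral>\<^sup>+w. ennreal (norm (\<gamma> w *\<^sub>R (\<integral>\<theta>. F (T w \<theta>) \<partial>sphere_measure))) \<partial>lborel_except k)"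
    unfolding eq .
  then show ?thesis
    by (simp add: \<gamma>_def T_def ennreal_mult)
qed

section \<open>The compression \<open>w \<mapsto> w / sqrt (1 + |w|\<^sup>2)\<close>\<close>

lemma has_real_derivative_compress:
  "((\<lambda>s::real. s / sqrt (1 + s^2)) has_real_derivative 1 / ((1 + s^2) * sqrt (1 + s^2))) (at s)"
proof -
  have p: "0 < 1 + s^2" by (simp add: add_pos_nonneg)
  have sp: "0 < sqrt (1 + s^2)" using p by simp
  have q: "sqrt (1 + s^2) * sqrt (1 + s^2) = 1 + s^2" using p by simp
  have "((\<lambda>s. 1 + s^2) has_real_derivative (2 * s)) (at s)"
    by (auto intro!: derivative_eq_intros)
  from DERIV_chain2[OF DERIV_real_sqrt[OF p] this]
  have d: "((\<lambda>s. sqrt (1 + s^2)) has_real_derivative (inverse (sqrt (1+s^2)) / 2) * (2 * s)) (at s)"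
    by simp
  have "((\<lambda>s. s / sqrt (1 + s^2)) has_real_derivative
      (1 * sqrt (1 + s^2) - s * ((inverse (sqrt (1+s^2)) / 2) * (2 * s))) /
        (sqrt (1 + s^2) * sqrt (1 + s^2))) (at s)"
    using p by (intro DERIV_divide[OF DERIV_ident d]) simp
  also have "1 * sqrt (1 + s^2) - s * ((inverse (sqrt (1+s^2)) / 2) * (2 * s)) = 1 / sqrt (1 + s^2)"
    using sp q by (simp add: field_simps power2_eq_square)
  finally show ?thesis
    unfolding q using sp by (simp add: field_simps)
qed

lemma compress_weight_le:
  fixes s :: real
  assumes s: "0 < s" and d: "1 \<le> d" and N: "d + 2 \<le> N"
  shows "s^(d-1) * sqrt (1 + s^2) powr - real N \<le>
    (s / sqrt (1 + s^2))^(d-1) * (1 / ((1 + s^2) * sqrt (1 + s^2)))"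
proof -
  let ?q = "sqrt (1 + s^2)"
  have q: "0 < ?q" "1 \<le> ?q" by (simp_all add: add_pos_nonneg)
  have "s^(d-1) * ?q powr - real N \<le> s^(d-1) * ?q powr - real (d + 2)"
    using N q s by (intro mult_left_mono powr_mono) auto
  also have "?q ^ (d + 2) = ?q^(d-1) * ((1 + s^2) * ?q)"
  proof -
    have "?q ^ (d + 2) = ?q^(d-1) * ?q^3" using d by (simp flip: power_add)
    also have "?q^3 = (1 + s^2) * ?q" by (simp add: power3_eq_cube add_nonneg_nonneg)
    finally show ?thesis .
  qed
  then have "?q powr - real (d + 2) = 1 / ?q^(d-1) * (1 / ((1 + s^2) * ?q))"
    using q by (simp only: powr_minus powr_realpow inverse_eq_divide) simp
  finally show ?thesis
    by (simp add: power_divide)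
qed

lemma nn_integral_atLeast_eq_SUP:
  fixes h :: "real \<Rightarrow> real"
  assumes [measurable]: "h \<in> borel_measurable borel" and h0: "\<And>s. 0 \<le> h s"
  shows "(\<integral>\<^sup>+s. ennreal (h s) * indicator {0..} s \<partial>lborel) =
    (SUP n::nat. \<integral>\<^sup>+s. ennreal (h s * indicator {0..real n} s) \<partial>lborel)"
proof -
  have "ennreal (h s) * indicator {0..} s = (SUP n::nat. ennreal (h s * indicator {0..real n} s))" for s
  proof (rule antisym)
    have "ennreal (h s) * indicator {0..} s = ennreal (h s * indicator {0..real (nat \<lceil>s\<rceil>)} s)"
      by (simp add: indicator_def)
    also have "\<dots> \<le> (SUP n::nat. ennreal (h s * indicator {0..real n} s))"
      by (rule SUP_upper) simp
    finally show "ennreal (h s) * indicator {0..} s \<le> \<dots>" .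
    show "(SUP n::nat. ennreal (h s * indicator {0..real n} s)) \<le> ennreal (h s) * indicator {0..} s"
      using h0 by (intro SUP_least) (auto simp: indicator_def)
  qed
  then show ?thesis
    using h0 by (simp, intro nn_integral_monotone_convergence_SUP)
      (auto simp: incseq_def le_fun_def indicator_def intro!: ennreal_leI)
qed

lemma nn_integral_compress_substitution:
  fixes f :: "real \<Rightarrow> real"
  assumes f[measurable]: "f \<in> borel_measurable borel" and f0: "\<And>r. 0 \<le> f r"
  shows "(\<integral>\<^sup>+s. ennreal (f (s / sqrt (1 + s^2)) * (1 / ((1 + s^2) * sqrt (1 + s^2)))) *
      indicator {0..} s \<partial>lborel) \<le> (\<integral>\<^sup>+r. ennreal (f r) * indicator {0..<1} r \<partial>lborel)"
proof -
  define g where "g s = s / sqrt (1 + s^2)" for s :: real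
  define g' where "g' s = 1 / ((1 + s^2) * sqrt (1 + s^2))" for s :: real
  have sq_pos: "0 < sqrt (1 + s^2)" for s :: real by (simp add: add_pos_nonneg)
  have g'0: "0 \<le> g' s" for s unfolding g'_def using sq_pos[of s] by (simp add: add_pos_nonneg)
  have g_less_1: "g s < 1" for s
  proof -
    have "s < sqrt (1 + s^2)"
      using real_sqrt_less_mono[of "s^2" "1 + s^2"] by (cases "s \<le> 0") (auto simp: add_pos_nonneg)
    then show ?thesis unfolding g_def using sq_pos[of s] by simp
  qed
  have [measurable]: "g \<in> borel_measurable borel" "g' \<in> borel_measurable borel"
    unfolding g_def g'_def by measurable
  have "(\<integral>\<^sup>+s. ennreal (f (g s) * g' s) * indicator {0..} s \<partial>lborel) =
      (SUP n::nat. (\<integral>\<^sup>+s. ennreal (f (g s) * g' s * indicator {0..real n} s) \<partial>lborel))"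
    using f0 g'0 by (intro nn_integral_atLeast_eq_SUP) simp_all
  also have "\<dots> \<le> (\<integral>\<^sup>+r. ennreal (f r) * indicator {0..<1} r \<partial>lborel)"
  proof (rule SUP_least)
    fix n :: nat
    have "continuous_on {a..b} g'" for a b
      unfolding g'_def using sq_pos by (intro continuous_intros) (auto simp: add_nonneg_eq_0_iff)
    then have "(\<integral>\<^sup>+s. ennreal (f (g s) * g' s * indicator {0..real n} s) \<partial>lborel) =
        (\<integral>\<^sup>+r. ennreal (f r * indicator {g 0..g (real n)} r) \<partial>lborel)"
      using has_real_derivative_compress g'0
      by (intro nn_integral_substitution[symmetric]) (auto simp: g_def g'_def set_borel_measurable_def)
    also have "\<dots> \<le> (\<integral>\<^sup>+r. ennreal (f r) * indicator {0..<1} r \<partial>lborel)"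
      using g_less_1[of "real n"] f0 by (intro nn_integral_mono) (auto simp: g_def indicator_def)
    finally show "(\<integral>\<^sup>+s. ennreal (f (g s) * g' s * indicator {0..real n} s) \<partial>lborel) \<le> \<dots>" .
  qed
  finally show ?thesis unfolding g_def g'_def .
qed

lemma nn_integral_radial_compress_le:
  fixes \<kappa> :: "real \<Rightarrow> real"
  assumes \<kappa>[measurable]: "\<kappa> \<in> borel_measurable borel" and \<kappa>0: "\<And>r. 0 \<le> \<kappa> r"
    and d: "1 \<le> d" and N: "d + 2 \<le> N"
  shows "(\<integral>\<^sup>+s. ennreal (indicator {0<..} s * s^(d-1) * sqrt (1 + s^2) powr - real N) *
      ennreal (\<kappa> (s / sqrt (1 + s^2))) \<partial>lborel) \<le>
    (\<integral>\<^sup>+r. ennreal (indicator {0<..<1} r * r^(d-1)) * ennreal (\<kappa> r) \<partial>lborel)"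
proof -
  define f where "f r = indicator {0<..} r * r^(d-1) * \<kappa> r" for r :: real
  have f0: "0 \<le> f r" for r unfolding f_def using \<kappa>0[of r] by (auto simp: indicator_def)
  have "(\<integral>\<^sup>+s. ennreal (indicator {0<..} s * s^(d-1) * sqrt (1 + s^2) powr - real N) *
      ennreal (\<kappa> (s / sqrt (1 + s^2))) \<partial>lborel) \<le>
    (\<integral>\<^sup>+s. ennreal (f (s / sqrt (1 + s^2)) * (1 / ((1 + s^2) * sqrt (1 + s^2)))) * indicator {0..} s \<partial>lborel)"
  proof (rule nn_integral_mono)
    fix s :: real
    show "ennreal (indicator {0<..} s * s^(d-1) * sqrt (1 + s^2) powr - real N) *
        ennreal (\<kappa> (s / sqrt (1 + s^2))) \<le>
      ennreal (f (s / sqrt (1 + s^2)) * (1 / ((1 + s^2) * sqrt (1 + s^2)))) * indicator {0..} s"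
    proof (cases "0 < s")
      case s: True
      let ?g = "s / sqrt (1 + s^2)" and ?g' = "1 / ((1 + s^2) * sqrt (1 + s^2))"
      have g: "0 < ?g" using s by (simp add: add_pos_nonneg)
      have "ennreal (indicator {0<..} s * s^(d-1) * sqrt (1 + s^2) powr - real N) * ennreal (\<kappa> ?g) =
          ennreal (s^(d-1) * sqrt (1 + s^2) powr - real N * \<kappa> ?g)"
        using s \<kappa>0 by (simp add: ennreal_mult)
      also have "\<dots> \<le> ennreal (?g^(d-1) * ?g' * \<kappa> ?g)"
        using \<kappa>0 by (intro ennreal_leI mult_right_mono compress_weight_le[OF s d N])
      also have "\<dots> = ennreal (f ?g * ?g') * indicator {0..} s"
        using s g by (simp add: f_def mult_ac)
      finally show ?thesis .
    qed (simp add: indicator_def)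
  qed
  also have "\<dots> \<le> (\<integral>\<^sup>+r. ennreal (f r) * indicator {0..<1} r \<partial>lborel)"
    using f0 by (intro nn_integral_compress_substitution) (simp_all add: f_def)
  also have "\<dots> = (\<integral>\<^sup>+r. ennreal (indicator {0<..<1} r * r^(d-1)) * ennreal (\<kappa> r) \<partial>lborel)"
    using \<kappa>0 by (intro nn_integral_cong) (auto simp: f_def indicator_def ennreal_mult[symmetric])
  finally show ?thesis .
qed

lemma (in homogeneous_measure) nn_integral_compress_le_ball:
  assumes K[measurable]: "K \<in> borel_measurable borel" and K0: "\<And>u. 0 \<le> K u" and N: "d + 2 \<le> N"
  shows "(\<integral>\<^sup>+w. ennreal (sqrt (1 + norm w ^ 2) powr - real N) * ennreal (K (w /\<^sub>R sqrt (1 + norm w ^ 2))) \<partial>\<mu>)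
    \<le> (\<integral>\<^sup>+u. indicator (ball 0 1) u * ennreal (K u) \<partial>\<mu>)"
proof -
  interpret pair_sigma_finite lborel sph
    by (intro pair_sigma_finite.intro lborel.sigma_finite_measure_axioms sph.sigma_finite_measure_axioms)
  define Q where "Q \<theta> s = ennreal (indicator {0<..} s * s^(d-1) * sqrt (1 + s^2) powr - real N) *
      ennreal (K ((s / sqrt (1 + s^2)) *\<^sub>R \<theta>))" for \<theta> and s :: real
  define R where "R \<theta> r = ennreal (indicator {0<..<1} r * r^(d-1)) * ennreal (K (r *\<^sub>R \<theta>))"
    for \<theta> and r :: real
  have [measurable]: "(\<lambda>(s, \<theta>). Q \<theta> s) \<in> borel_measurable (lborel \<Otimes>\<^sub>M sph)"
    "(\<lambda>(s, \<theta>). R \<theta> s) \<in> borel_measurable (lborel \<Otimes>\<^sub>M sph)"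
    unfolding Q_def R_def by measurable
  have [measurable]: "ball (0::'a) 1 \<in> sets borel" by simp
  text \<open>In polar coordinates the claim reduces, ray by ray, to the one-dimensional inequality.\<close>
  have "(\<integral>\<^sup>+w. ennreal (sqrt (1 + norm w ^ 2) powr - real N) * ennreal (K (w /\<^sub>R sqrt (1 + norm w ^ 2))) \<partial>\<mu>) =
      (\<integral>\<^sup>+s. (\<integral>\<^sup>+\<theta>. Q \<theta> s \<partial>sph) \<partial>lborel)"
  proof (subst nn_integral_polar, measurable, intro nn_integral_cong)
    fix s :: real
    show "ennreal (indicator {0<..} s * s ^ (d - 1)) *
        (\<integral>\<^sup>+\<theta>. ennreal (sqrt (1 + norm (s *\<^sub>R \<theta>) ^ 2) powr - real N) *
        ennreal (K ((s *\<^sub>R \<theta>) /\<^sub>R sqrt (1 + norm (s *\<^sub>R \<theta>) ^ 2))) \<partial>sph) = (\<integral>\<^sup>+\<theta>. Q \<theta> s \<partial>sph)"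
      by (subst nn_integral_cmult[symmetric], measurable, rule nn_integral_cong_AE)
         (use AE_sph_norm_eq_1 in \<open>eventually_elim, cases "0 < s",
           auto simp: Q_def ennreal_mult divide_inverse_commute mult.assoc\<close>)
  qed
  also have "\<dots> = (\<integral>\<^sup>+\<theta>. (\<integral>\<^sup>+s. Q \<theta> s \<partial>lborel) \<partial>sph)"
    by (rule Fubini'[where f="\<lambda>s \<theta>. Q \<theta> s", symmetric]) measurable
  also have "\<dots> \<le> (\<integral>\<^sup>+\<theta>. (\<integral>\<^sup>+r. R \<theta> r \<partial>lborel) \<partial>sph)"
  proof (rule nn_integral_mono)
    fix \<theta> :: 'a
    have [measurable]: "(\<lambda>r. K (r *\<^sub>R \<theta>)) \<in> borel_measurable borel" by measurable
    show "(\<integral>\<^sup>+s. Q \<theta> s \<partial>lborel) \<le> (\<integral>\<^sup>+r. R \<theta> r \<partial>lborel)"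
      unfolding Q_def R_def using K0 d_pos N by (intro nn_integral_radial_compress_le) simp_all
  qed
  also have "\<dots> = (\<integral>\<^sup>+r. (\<integral>\<^sup>+\<theta>. R \<theta> r \<partial>sph) \<partial>lborel)"
    by (rule Fubini'[where f="\<lambda>r \<theta>. R \<theta> r"]) measurable
  also have "\<dots> = (\<integral>\<^sup>+u. indicator (ball 0 1) u * ennreal (K u) \<partial>\<mu>)"
  proof (subst nn_integral_polar, measurable, intro nn_integral_cong)
    fix r :: real
    show "(\<integral>\<^sup>+\<theta>. R \<theta> r \<partial>sph) = ennreal (indicator {0<..} r * r ^ (d - 1)) *
        (\<integral>\<^sup>+\<theta>. indicator (ball 0 1) (r *\<^sub>R \<theta>) * ennreal (K (r *\<^sub>R \<theta>)) \<partial>sph)"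
      by (subst nn_integral_cmult[symmetric], measurable, rule nn_integral_cong_AE)
         (use AE_sph_norm_eq_1 in eventually_elim, auto simp: R_def indicator_def mem_ball_0)
  qed
  finally show ?thesis .
qed

section \<open>Maximal functions\<close>

lemma continuous_on_schwartz: assumes "schwartz f" shows "continuous_on UNIV f"
proof -
  have "\<forall>x. f differentiable (at x)"
    using assms unfolding schwartz_def by (metis empty_subsetI iter_partial.simps(1) list.set(1))
  then show ?thesis
    by (intro continuous_at_imp_continuous_on) (auto intro: differentiable_imp_continuous_within)
qed

lemma borel_measurable_schwartz: "schwartz f \<Longrightarrow> f \<in> borel_measurable borel"
  by (rule borel_measurable_continuous_onI) (rule continuous_on_schwartz)

lemma schwartz_bounded: assumes "schwartz f" shows "\<exists>B. \<forall>x. norm (f x) \<le> B"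
proof -
  have "bounded (range (\<lambda>x. ((1 + norm x) ^ 0) *\<^sub>R iter_partial [] f x))"
    using assms unfolding schwartz_def by (metis empty_subsetI list.set(1))
  then have "bounded (range f)" by simp
  then show ?thesis by (auto simp: bounded_iff)
qed

lemma nn_integral_ball_rescale:
  fixes h :: "'a::euclidean_space \<Rightarrow> ennreal"
  assumes [measurable]: "h \<in> borel_measurable borel" and t: "0 < t"
  shows "(\<integral>\<^sup>+y\<in>ball x t. h y \<partial>lborel) =
    ennreal (t ^ DIM('a)) * (\<integral>\<^sup>+v. indicator (ball 0 1) v * h (x - t *\<^sub>R v) \<partial>lborel)"
proof -
  have aff: "(lborel :: 'a measure) = density (distr lborel borel (\<lambda>v. x + (- t) *\<^sub>R v)) (\<lambda>_. \<bar>- t\<bar> ^ DIM('a))"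
    by (rule lborel_affine) (use t in simp)
  have [measurable]: "ball x t \<in> sets borel" by simp
  have "(\<integral>\<^sup>+y\<in>ball x t. h y \<partial>lborel) = ennreal (t ^ DIM('a)) *
      (\<integral>\<^sup>+v. h (x + (- t) *\<^sub>R v) * indicator (ball x t) (x + (- t) *\<^sub>R v) \<partial>lborel)"
    by (subst aff) (simp add: nn_integral_density nn_integral_distr nn_integral_cmult t less_imp_le)
  also have "(\<integral>\<^sup>+v. h (x + (- t) *\<^sub>R v) * indicator (ball x t) (x + (- t) *\<^sub>R v) \<partial>lborel) =
      (\<integral>\<^sup>+v. indicator (ball 0 1) v * h (x - t *\<^sub>R v) \<partial>lborel)"
  proof -
    have "\<bar>t\<bar> * norm v < t \<longleftrightarrow> norm v < 1" for v :: 'a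
      using t by (simp add: abs_of_pos)
    then show ?thesis
      by (intro nn_integral_cong) (simp add: indicator_def dist_norm mem_ball_0)
  qed
  finally show ?thesis .
qed

lemma nn_integral_ball_le_HL_max:
  fixes f :: "'a::euclidean_space \<Rightarrow> complex"
  assumes fm[measurable]: "f \<in> borel_measurable borel" and t: "0 < t"
  shows "(\<integral>\<^sup>+v. indicator (ball 0 1) v * ennreal (norm (f (x - t *\<^sub>R v))) \<partial>lborel)
     \<le> ennreal (unit_ball_vol (real DIM('a))) * HL_max f x"
proof -
  define L where "L = (\<integral>\<^sup>+v. indicator (ball 0 1) v * ennreal (norm (f (x - t *\<^sub>R v))) \<partial>lborel)"
  define A where "A = (\<integral>\<^sup>+y\<in>ball x t. ennreal (norm (f y)) \<partial>lborel)"
  define b where "b = ennreal (unit_ball_vol (real DIM('a)))"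
  have AL: "A = ennreal (t ^ DIM('a)) * L"
    unfolding A_def L_def using t by (rule nn_integral_ball_rescale[rotated]) measurable
  have Bt: "emeasure lborel (ball x t) = ennreal (t ^ DIM('a)) * b"
    unfolding b_def using t by (simp add: emeasure_ball ennreal_mult[symmetric] mult.commute)
  have ubv: "0 < unit_ball_vol (real DIM('a))" by (rule unit_ball_vol_pos) simp
  have b0: "b \<noteq> 0" "b \<noteq> \<infinity>" unfolding b_def ennreal_eq_0_iff using ubv by (linarith, simp)
  have t0: "ennreal (t ^ DIM('a)) \<noteq> 0" "ennreal (t ^ DIM('a)) \<noteq> \<infinity>" using t by auto
  have "A / emeasure lborel (ball x t) \<le> HL_max f x"
    unfolding HL_max_def A_def using t by (intro SUP_upper) auto
  then have "A / emeasure lborel (ball x t) * emeasure lborel (ball x t) \<le>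
      HL_max f x * emeasure lborel (ball x t)"
    by (rule mult_right_mono) simp
  moreover have "A / emeasure lborel (ball x t) * emeasure lborel (ball x t) = A"
  proof -
    have "ennreal (t ^ DIM('a)) * b \<noteq> 0" "ennreal (t ^ DIM('a)) * b < \<infinity>"
      using b0 t0 by (auto simp: ennreal_mult_eq_top_iff ennreal_mult_less_top less_top)
    then show ?thesis unfolding Bt ennreal_divide_times by simp
  qed
  ultimately have "ennreal (t ^ DIM('a)) * L \<le> ennreal (t ^ DIM('a)) * (b * HL_max f x)"
    unfolding AL Bt by (simp add: mult_ac)
  then have "L \<le> b * HL_max f x" using t0 by (simp add: ennreal_mult_le_mult_iff)
  then show ?thesis unfolding L_def b_def .
qed

lemma nn_integral_ball_prod_le:
  fixes G :: "'m::finite \<Rightarrow> 'a::euclidean_space \<Rightarrow> ennreal"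
  assumes [measurable]: "\<And>j. G j \<in> borel_measurable borel"
  shows "(\<integral>\<^sup>+u. indicator (ball 0 1) u * (\<Prod>j\<in>UNIV - {k}. G j (u $ j)) \<partial>lborel_except k)
    \<le> (\<Prod>j\<in>UNIV - {k}. \<integral>\<^sup>+v. indicator (ball 0 1) v * G j v \<partial>lborel)"
proof -
  interpret product_sigma_finite "\<lambda>_. lborel :: 'a measure" by standard
  have [measurable]: "ball (0::'a^'m) 1 \<in> sets borel" "ball (0::'a) 1 \<in> sets borel" by simp_all
  have "(\<integral>\<^sup>+u. indicator (ball 0 1) u * (\<Prod>j\<in>UNIV - {k}. G j (u $ j)) \<partial>lborel_except k) =
      (\<integral>\<^sup>+g. indicator (ball 0 1) (vec_except k g) * (\<Prod>j\<in>UNIV - {k}. G j (vec_except k g $ j))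
        \<partial>PiM (UNIV - {k}) (\<lambda>_. lborel))"
    by (rule nn_integral_lborel_except) measurable
  also have "\<dots> \<le> (\<integral>\<^sup>+g. (\<Prod>j\<in>UNIV - {k}. indicator (ball 0 1) (g j) * G j (g j)) \<partial>PiM (UNIV - {k}) (\<lambda>_. lborel))"
  proof (rule nn_integral_mono)
    fix g :: "'m \<Rightarrow> 'a"
    have "vec_except k g $ j = g j" if "j \<noteq> k" for j using that by (simp add: vec_except_def)
    moreover have "g j \<in> ball 0 1" if "j \<noteq> k" "vec_except k g \<in> ball 0 1" for j
      using norm_le_norm_vec_except[OF that(1), of g] that(2) by simp
    ultimately show "indicator (ball 0 1) (vec_except k g) * (\<Prod>j\<in>UNIV - {k}. G j (vec_except k g $ j))
        \<le> (\<Prod>j\<in>UNIV - {k}. indicator (ball 0 1) (g j) * G j (g j))"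
      by (cases "vec_except k g \<in> ball 0 1") (auto intro!: prod.cong)
  qed
  also have "\<dots> = (\<Prod>j\<in>UNIV - {k}. \<integral>\<^sup>+v. indicator (ball 0 1) v * G j v \<partial>lborel)"
    by (rule product_nn_integral_prod) auto
  finally show ?thesis .
qed

lemma norm_integral_slice_le_sph_max:
  fixes f :: "'m::finite \<Rightarrow> 'a::euclidean_space \<Rightarrow> complex"
  assumes w: "w $ k = 0" and t: "0 < t" and r: "0 < r"
  shows "ennreal (norm (\<integral>\<theta>. (\<Prod>j\<in>UNIV. f j (x - t *\<^sub>R (((w + vec_block k \<theta>) /\<^sub>R r) $ j))) \<partial>sphere_measure))
    \<le> ennreal (norm (\<Prod>j\<in>UNIV - {k}. f j (x - t *\<^sub>R ((w /\<^sub>R r) $ j)))) * sph_max (f k) x"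
proof -
  have "(\<Prod>j\<in>UNIV. f j (x - t *\<^sub>R (((w + vec_block k \<theta>) /\<^sub>R r) $ j))) =
      (\<Prod>j\<in>UNIV - {k}. f j (x - t *\<^sub>R ((w /\<^sub>R r) $ j))) * f k (x - (t / r) *\<^sub>R \<theta>)" for \<theta>
    by (subst prod.remove[of _ k])
       (auto simp: vec_block_def w mult.commute divide_inverse_commute intro!: prod.cong)
  moreover have "ennreal (norm (\<integral>\<theta>. f k (x - (t / r) *\<^sub>R \<theta>) \<partial>sphere_measure)) \<le> sph_max (f k) x"
    unfolding sph_max_def using t r by (intro SUP_upper) auto
  ultimately show ?thesis
    by (simp add: norm_mult ennreal_mult mult_left_mono)
qed

lemma multilinear_spherical_average_le:
  fixes f :: "'m::finite \<Rightarrow> 'a::euclidean_space \<Rightarrow> complex" and k :: 'm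
  assumes m2: "2 \<le> CARD('m)" and n2: "2 \<le> DIM('a)" and fm[measurable]: "\<And>j. f j \<in> borel_measurable borel"
    and bdd: "\<And>j y. norm (f j y) \<le> B j" and t: "0 < t"
  shows "ennreal (norm (\<integral>y. (\<Prod>j\<in>UNIV. f j (x - t *\<^sub>R (y $ j))) \<partial>(sphere_measure :: ('a^'m) measure)))
    \<le> ennreal (unit_ball_vol (real DIM('a)) ^ (CARD('m) - 1)) * (\<Prod>j\<in>UNIV - {k}. HL_max (f j) x) * sph_max (f k) x"
proof -
  define d where "d = DIM('a) * (CARD('m) - 1)"
  define N where "N = DIM('a^'m)"
  interpret U: homogeneous_measure "lborel_except k :: ('a^'m) measure" d
    unfolding d_def by (rule homogeneous_lborel_except[OF m2])
  have "N = d + DIM('a)" using m2 by (simp add: N_def d_def algebra_simps)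
  then have N: "d + 2 \<le> N" using n2 by simp
  define \<rho> where "\<rho> w = sqrt (1 + norm w ^ 2)" for w :: "'a^'m"
  define F where "F y = (\<Prod>j\<in>UNIV. f j (x - t *\<^sub>R (y $ j)))" for y :: "'a^'m"
  define P where "P u = (\<Prod>j\<in>UNIV - {k}. f j (x - t *\<^sub>R (u $ j)))" for u :: "'a^'m"
  define S where "S = sph_max (f k) x"
  define I where "I w = norm (\<integral>\<theta>. F ((w + vec_block k \<theta>) /\<^sub>R \<rho> w) \<partial>sphere_measure)" for w
  have \<rho>_pos: "0 < \<rho> w" for w by (simp add: \<rho>_def add_pos_nonneg)
  have [measurable]: "F \<in> borel_measurable borel" "P \<in> borel_measurable borel"
    unfolding F_def P_def by measurable
  have slice: "ennreal (\<rho> w powr - real N) * ennreal (I w) \<le>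
      S * (ennreal (\<rho> w powr - real N) * ennreal (norm (P (w /\<^sub>R \<rho> w))))" if "w $ k = 0" for w
  proof -
    have "ennreal (I w) \<le> ennreal (norm (P (w /\<^sub>R \<rho> w))) * S"
      unfolding I_def F_def P_def S_def by (rule norm_integral_slice_le_sph_max[OF that t \<rho>_pos])
    from mult_left_mono[OF this, of "ennreal (\<rho> w powr - real N)"] show ?thesis
      by (simp add: mult_ac)
  qed
  have "norm (F y) \<le> (\<Prod>j\<in>UNIV. B j)" for y
    unfolding F_def prod_norm[symmetric] by (intro prod_mono) (auto intro: bdd)
  then have "ennreal (norm (\<integral>y. F y \<partial>(sphere_measure :: ('a^'m) measure))) \<le>
      (\<integral>\<^sup>+w. ennreal (\<rho> w powr - real N) * ennreal (I w) \<partial>lborel_except k)"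
    unfolding \<rho>_def N_def I_def by (intro norm_integral_sphere_measure_slice_le[OF m2]) simp_all
  also have "\<dots> \<le> (\<integral>\<^sup>+w. S * (ennreal (\<rho> w powr - real N) * ennreal (norm (P (w /\<^sub>R \<rho> w)))) \<partial>lborel_except k)"
    by (rule nn_integral_mono_AE, rule eventually_mono[OF AE_lborel_except]) (rule slice)
  also have "\<dots> = S * (\<integral>\<^sup>+w. ennreal (\<rho> w powr - real N) * ennreal (norm (P (w /\<^sub>R \<rho> w))) \<partial>lborel_except k)"
    unfolding \<rho>_def by (rule nn_integral_cmult) measurable
  also have "\<dots> \<le> S * (\<integral>\<^sup>+u. indicator (ball 0 1) u * ennreal (norm (P u)) \<partial>lborel_except k)"
    unfolding \<rho>_def by (intro mult_left_mono U.nn_integral_compress_le_ball N) simp_all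
  also have "\<dots> = S * (\<integral>\<^sup>+u. indicator (ball 0 1) u *
      (\<Prod>j\<in>UNIV - {k}. ennreal (norm (f j (x - t *\<^sub>R (u $ j))))) \<partial>lborel_except k)"
    by (simp add: P_def prod_norm[symmetric] prod_ennreal)
  also have "\<dots> \<le> S * (\<Prod>j\<in>UNIV-{k}. \<integral>\<^sup>+v. indicator (ball 0 1) v * ennreal (norm (f j (x - t *\<^sub>R v))) \<partial>lborel)"
    by (intro mult_left_mono nn_integral_ball_prod_le) simp_all
  also have "\<dots> \<le> S * (\<Prod>j\<in>UNIV-{k}. ennreal (unit_ball_vol (real DIM('a))) * HL_max (f j) x)"
    by (intro mult_left_mono prod_mono_ennreal nn_integral_ball_le_HL_max fm t) auto
  also have "\<dots> = ennreal (unit_ball_vol (real DIM('a)) ^ (CARD('m) - 1)) * (\<Prod>j\<in>UNIV - {k}. HL_max (f j) x) * S"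
    by (simp add: prod.distrib ennreal_power card_Diff_singleton mult_ac)
  finally show ?thesis unfolding F_def S_def .
qed

theorem mainTheorem6:
  assumes "CARD('n::finite) \<ge> 2" and "CARD('m::finite) \<ge> 2"
  shows "\<exists>C::real. C > 0 \<and>
    (\<forall>(f :: 'm \<Rightarrow> real^'n \<Rightarrow> complex) k x. (\<forall>j. schwartz (f j)) \<longrightarrow>
       multi_sph_max f x \<le> ennreal C * (\<Prod>j\<in>UNIV - {k}. HL_max (f j) x) * sph_max (f k) x)"
proof (intro exI conjI allI impI)
  define C where "C = unit_ball_vol (real DIM(real^'n)) ^ (CARD('m) - 1)"
  have "0 < unit_ball_vol (real DIM(real^'n))" by (rule unit_ball_vol_pos) simp
  then show "0 < C" unfolding C_def by simp
  fix f :: "'m \<Rightarrow> real^'n \<Rightarrow> complex" and k x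
  assume sch: "\<forall>j. schwartz (f j)"
  have fm: "\<And>j. f j \<in> borel_measurable borel" using sch borel_measurable_schwartz by blast
  have "\<forall>j. \<exists>B. \<forall>y. norm (f j y) \<le> B" using sch schwartz_bounded by blast
  then obtain B where bdd: "\<And>j y. norm (f j y) \<le> B j" by (metis choice_iff)
  have n2: "2 \<le> DIM(real^'n)" using assms(1) by simp
  show "multi_sph_max f x \<le> ennreal C * (\<Prod>j\<in>UNIV - {k}. HL_max (f j) x) * sph_max (f k) x"
    unfolding multi_sph_max_def C_def
    by (intro SUP_least multilinear_spherical_average_le[OF assms(2) n2 fm bdd]) auto
qed

end
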